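(* Let $\mathcal{X}$, $\mathcal{Y}$ be finite sets, $\mathcal{H}_S$ a finite-dimensional Hilbert space, and $\{\mathcal{N}^{y|x}\}_{x\in\mathcal{X},y\in\mathcal{Y}}$ an indecomposable CC-QSC acting on $\mathcal{H}_S$. Let $Q$ be a probability mass function on $\mathcal{X}$. For an initial density operator $\rho_{S_0}\in\mathfrak{D}(\mathcal{H}_S)$ and $n\ge1$, let $(X_1^n,Y_1^n)$ be random sequences on $\mathcal{X}^n\times\mathcal{Y}^n$ with joint pmf \[ P(\mathbf{x}_1^n,\mathbf{y}_1^n)=\prod_{\ell=1}^n Q(x_\ell)\cdot\operatorname{tr}\big(\mathcal{N}^{y_n|x_n}\circ\cdots\circ\mathcal{N}^{y_1|x_1}(\rho_{S_0})\big), \] and define $\mathrm{I}^{(n)}(Q,\{\mathcal{N}^{y|x}\},\rho_{S_0})\triangleq\frac1n \mathbf{I}(X_1^n;Y_1^n)$, the (classical) mutual information under this joint pmf, divided by $n$. Then for any $\alpha_{S_0},\beta_{S_0}\in\mathfrak{D}(\mathcal{H}_S)$, \[ \mathrm{I}^{(n)}(Q,\{\mathcal{N}^{y|x}\},\alpha_{S_0})-\mathrm{I}^{(n)}(Q,\{\mathcal{N}^{y|x}\},\beta_{S_0})\xrightarrow{n\to\infty}0 . \]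
   Context: $\mathfrak{D}(\mathcal{H})$ denotes the set of density operators on $\mathcal{H}$. A (classical-input classical-output) quantum-state channel (CC-QSC) is a finitely indexed family $\{\mathcal{N}^{y|x}\}_{x\in\mathcal{X},y\in\mathcal{Y}}$ of completely positive maps, all acting on operators on the same Hilbert space $\mathcal{H}_S$, such that $\sum_{y\in\mathcal{Y}}\mathcal{N}^{y|x}$ is trace-preserving for each $x\in\mathcal{X}$. A CC-QSC is called indecomposable if for any initial density operators $\alpha_{S_0},\beta_{S_0}$ and any $\varepsilon>0$ there exists a positive integer $N$ such that $\|\alpha_{S_n}^{(\mathbf{x}_1^n)}-\beta_{S_n}^{(\mathbf{x}_1^n)}\|_1<\varepsilon$ for all $n\ge N$ and all $\mathbf{x}_1^n\in\mathcal{X}^n$, where $\alpha_{S_n}^{(\mathbf{x}_1^n)}\triangleq\sum_{\mathbf{y}_1^n\in\mathcal{Y}^n}\mathcal{N}^{y_n|x_n}\circ\cdots\circ\mathcal{N}^{y_1|x_1}(\alpha_{S_0})$, similarly for $\beta$, and $\|A\|_1\triangleq\frac12\operatorname{tr}\sqrt{A^\dagger A}$ is the trace distance. *)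

theory Defs
  imports Complex_Main "Jordan_Normal_Form.Schur_Decomposition"
begin

(* Operators on H_S = C^d are represented as d x d complex matrices. *)

definition mtrace :: "complex mat \<Rightarrow> complex" where
  "mtrace A = (\<Sum>i<dim_row A. A $$ (i, i))"

definition psd :: "complex mat \<Rightarrow> bool" where
  "psd A \<longleftrightarrow> A \<in> carrier_mat (dim_row A) (dim_row A) \<and> mat_adjoint A = A \<and>
     (\<forall>v \<in> carrier_vec (dim_row A). 0 \<le> Re (scalar_prod (conjugate v) (A *\<^sub>v v)))"

definition density :: "nat \<Rightarrow> complex mat \<Rightarrow> bool" where
  "density d A \<longleftrightarrow> A \<in> carrier_mat d d \<and> psd A \<and> mtrace A = 1"

definition trace_dist_norm :: "complex mat \<Rightarrow> real" where
  "trace_dist_norm A = (1/2) * Re (mtrace (THE B. B \<in> carrier_mat (dim_col A) (dim_col A) \<and> psd B \<and>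
      B * B = mat_adjoint A * A))"

(* (id_k \<otimes> Phi) applied to a (k*d) x (k*d) block matrix *)
definition block_apply :: "nat \<Rightarrow> nat \<Rightarrow> (complex mat \<Rightarrow> complex mat) \<Rightarrow> complex mat \<Rightarrow> complex mat" where
  "block_apply k d \<Phi> A = mat (k * d) (k * d) (\<lambda>(i, j).
      \<Phi> (mat d d (\<lambda>(a, b). A $$ ((i div d) * d + a, (j div d) * d + b))) $$ (i mod d, j mod d))"

definition completely_positive :: "nat \<Rightarrow> (complex mat \<Rightarrow> complex mat) \<Rightarrow> bool" where
  "completely_positive d \<Phi> \<longleftrightarrow>
     (\<forall>A \<in> carrier_mat d d. \<Phi> A \<in> carrier_mat d d) \<and>
     (\<forall>A \<in> carrier_mat d d. \<forall>B \<in> carrier_mat d d. \<Phi> (A + B) = \<Phi> A + \<Phi> B) \<and>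
     (\<forall>A \<in> carrier_mat d d. \<forall>c. \<Phi> (c \<cdot>\<^sub>m A) = c \<cdot>\<^sub>m \<Phi> A) \<and>
     (\<forall>k. \<forall>A \<in> carrier_mat (k * d) (k * d). psd A \<longrightarrow> psd (block_apply k d \<Phi> A))"

definition msum :: "nat \<Rightarrow> ('i \<Rightarrow> complex mat) \<Rightarrow> 'i set \<Rightarrow> complex mat" where
  "msum d f S = mat d d (\<lambda>ij. \<Sum>s\<in>S. f s $$ ij)"

definition cc_qsc :: "nat \<Rightarrow> ('x::finite \<Rightarrow> 'y::finite \<Rightarrow> complex mat \<Rightarrow> complex mat) \<Rightarrow> bool" where
  "cc_qsc d N \<longleftrightarrow> (\<forall>x y. completely_positive d (N x y)) \<and>
     (\<forall>x. \<forall>A \<in> carrier_mat d d. mtrace (msum d (\<lambda>y. N x y A) UNIV) = mtrace A)"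

definition apply_seq :: "('x \<Rightarrow> 'y \<Rightarrow> complex mat \<Rightarrow> complex mat) \<Rightarrow> 'x list \<Rightarrow> 'y list \<Rightarrow> complex mat \<Rightarrow> complex mat" where
  "apply_seq N xs ys \<rho> = fold (\<lambda>(x, y) r. N x y r) (zip xs ys) \<rho>"

definition out_state :: "nat \<Rightarrow> ('x \<Rightarrow> 'y::finite \<Rightarrow> complex mat \<Rightarrow> complex mat) \<Rightarrow> 'x list \<Rightarrow> complex mat \<Rightarrow> complex mat" where
  "out_state d N xs \<rho> = msum d (\<lambda>ys. apply_seq N xs ys \<rho>) {ys. length ys = length xs}"

definition indecomposable :: "nat \<Rightarrow> ('x::finite \<Rightarrow> 'y::finite \<Rightarrow> complex mat \<Rightarrow> complex mat) \<Rightarrow> bool" where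
  "indecomposable d N \<longleftrightarrow>
     (\<forall>\<alpha> \<beta>. density d \<alpha> \<longrightarrow> density d \<beta> \<longrightarrow>
       (\<forall>\<epsilon>>0. \<exists>N0>0. \<forall>n\<ge>N0. \<forall>xs. length xs = n \<longrightarrow>
          trace_dist_norm (out_state d N xs \<alpha> - out_state d N xs \<beta>) < \<epsilon>))"

definition joint_pmf :: "('x \<Rightarrow> real) \<Rightarrow> ('x \<Rightarrow> 'y \<Rightarrow> complex mat \<Rightarrow> complex mat) \<Rightarrow> complex mat \<Rightarrow> 'x list \<Rightarrow> 'y list \<Rightarrow> real" where
  "joint_pmf Q N \<rho> xs ys = (\<Prod>x\<leftarrow>xs. Q x) * Re (mtrace (apply_seq N xs ys \<rho>))"

definition mutual_info_n :: "('x::finite \<Rightarrow> real) \<Rightarrow> ('x \<Rightarrow> 'y::finite \<Rightarrow> complex mat \<Rightarrow> complex mat) \<Rightarrow> complex mat \<Rightarrow> nat \<Rightarrow> real" where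
  "mutual_info_n Q N \<rho> n =
     (let P = joint_pmf Q N \<rho>;
          Xs = {xs::'x list. length xs = n}; Ys = {ys::'y list. length ys = n};
          PX = (\<lambda>xs. \<Sum>ys\<in>Ys. P xs ys); PY = (\<lambda>ys. \<Sum>xs\<in>Xs. P xs ys)
      in \<Sum>xs\<in>Xs. \<Sum>ys\<in>Ys. if P xs ys = 0 then 0 else P xs ys * log 2 (P xs ys / (PX xs * PY ys)))"

definition I_n :: "('x::finite \<Rightarrow> real) \<Rightarrow> ('x \<Rightarrow> 'y::finite \<Rightarrow> complex mat \<Rightarrow> complex mat) \<Rightarrow> complex mat \<Rightarrow> nat \<Rightarrow> real" where
  "I_n Q N \<rho> n = mutual_info_n Q N \<rho> n / real n"

end

(*
  Summing out the first k outputs changes I(X_1^n; Y_1^n) by at most k log |Y|, and the joint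
  law of (X_1^n, Y_(k+1)^n) depends on the initial state only through the averaged channel state
  after k uses.  By indecomposability the states obtained from alpha and beta are epsilon-close
  in trace distance once k is large.  Splitting their difference into its positive and negative
  parts (spectral theorem) couples the two laws up to perturbations of total mass epsilon, and
  continuity of entropy then bounds the difference of the mutual informations by
  C_k + O(epsilon n log (|X| |Y|)).  Dividing by n and letting epsilon tend to 0 proves the claim.
*)

theory Submission
  imports Defs "Jordan_Normal_Form.Spectral_Radius"
begin

section \<open>Hermitian matrices and orthonormal bases\<close>

lemma mat_adjoint_dim [simp]:
  "dim_row (mat_adjoint A) = dim_col A" "dim_col (mat_adjoint A) = dim_row A"
  unfolding mat_adjoint_def by auto

lemma index_mat_adjoint [simp]:
  "i < dim_col A \<Longrightarrow> j < dim_row A \<Longrightarrow> mat_adjoint A $$ (i, j) = cnj (A $$ (j, i))"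
  unfolding mat_adjoint_def by (auto simp: mat_of_rows_def)

lemma hermitian_iff_index:
  fixes A :: "complex mat"
  assumes A: "A \<in> carrier_mat n n"
  shows "mat_adjoint A = A \<longleftrightarrow> (\<forall>i<n. \<forall>j<n. A $$ (i, j) = cnj (A $$ (j, i)))"
proof
  assume h: "mat_adjoint A = A"
  have "A $$ (i, j) = cnj (A $$ (j, i))" if "i < n" "j < n" for i j
    using index_mat_adjoint[of i A j] A that unfolding h by simp
  then show "\<forall>i<n. \<forall>j<n. A $$ (i, j) = cnj (A $$ (j, i))"
    by blast
next
  assume h: "\<forall>i<n. \<forall>j<n. A $$ (i, j) = cnj (A $$ (j, i))"
  show "mat_adjoint A = A"
  proof (rule eq_matI)
    fix i j assume "i < dim_row A" "j < dim_col A"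
    then show "mat_adjoint A $$ (i, j) = A $$ (i, j)"
      using A h[rule_format, of i j] by simp
  qed (use A in auto)
qed

lemma hermitian_index:
  fixes A :: "complex mat"
  assumes "A \<in> carrier_mat n n" "mat_adjoint A = A" "i < n" "j < n"
  shows "A $$ (i, j) = cnj (A $$ (j, i))"
  using assms hermitian_iff_index by blast

lemma hermitian_diff:
  fixes A B :: "complex mat"
  assumes A: "A \<in> carrier_mat n n" and B: "B \<in> carrier_mat n n"
    and "mat_adjoint A = A" "mat_adjoint B = B"
  shows "mat_adjoint (A - B) = A - B"
proof -
  have "(A - B) $$ (i, j) = cnj ((A - B) $$ (j, i))" if "i < n" "j < n" for i j
    using A B that hermitian_index[OF A assms(3) that, symmetric]
      hermitian_index[OF B assms(4) that, symmetric]
    by simp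
  moreover have "A - B \<in> carrier_mat n n"
    using B by (rule minus_carrier_mat)
  ultimately show ?thesis
    using hermitian_iff_index[of "A - B" n] by blast
qed

lemma mat_diff_eq_imp_add_eq:
  fixes A B C D :: "'a::ab_group_add mat"
  assumes "A \<in> carrier_mat n n" "B \<in> carrier_mat n n" "C \<in> carrier_mat n n" "D \<in> carrier_mat n n"
    and "A - B = C - D"
  shows "A + D = B + C"
proof (rule eq_matI)
  fix i j assume "i < dim_row (B + C)" "j < dim_col (B + C)"
  then have ij: "i < n" "j < n"
    using assms by auto
  have "(A - B) $$ (i, j) = (C - D) $$ (i, j)"
    using assms(5) by simp
  then have "A $$ (i, j) - B $$ (i, j) = C $$ (i, j) - D $$ (i, j)"
    using assms(1-4) ij by simp
  then show "(A + D) $$ (i, j) = (B + C) $$ (i, j)"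
    using assms(1-4) ij by (simp add: algebra_simps eq_diff_eq diff_eq_eq)
qed (use assms in auto)

lemma conjugate_scalar_prod_sum:
  fixes u v :: "complex vec"
  shows "dim_vec u = dim_vec v \<Longrightarrow> conjugate u \<bullet> v = (\<Sum>i<dim_vec v. cnj (u $ i) * v $ i)"
  unfolding scalar_prod_def by (auto simp: lessThan_atLeast0 intro!: sum.cong)

lemma mult_mat_vec_index_sum:
  fixes A :: "complex mat"
  shows "i < dim_row A \<Longrightarrow> dim_col A = dim_vec v \<Longrightarrow>
    (A *\<^sub>v v) $ i = (\<Sum>j<dim_vec v. A $$ (i, j) * v $ j)"
  by (auto simp: scalar_prod_def lessThan_atLeast0 intro!: sum.cong)

lemma conjugate_self_scalar_prod:
  fixes v :: "complex vec"
  shows "v \<in> carrier_vec n \<Longrightarrow> conjugate v \<bullet> v = of_real (\<Sum>i<n. (cmod (v $ i))\<^sup>2)"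
  by (simp add: conjugate_scalar_prod_sum complex_norm_square[symmetric] mult.commute
      del: of_real_power)

lemma conjugate_self_scalar_prod_eq_0_iff:
  fixes v :: "complex vec"
  assumes v: "v \<in> carrier_vec n"
  shows "conjugate v \<bullet> v = 0 \<longleftrightarrow> v = 0\<^sub>v n"
  using conjugate_vec_sprod_comm[OF v v] conjugate_square_eq_0_vec[OF v] by simp

lemma hermitian_scalar_prod_swap:
  fixes A :: "complex mat"
  assumes A: "A \<in> carrier_mat n n" and h: "mat_adjoint A = A"
    and v: "v \<in> carrier_vec n" and w: "w \<in> carrier_vec n"
  shows "conjugate (A *\<^sub>v v) \<bullet> w = conjugate v \<bullet> (A *\<^sub>v w)"
proof -
  have Av: "\<And>i. i < n \<Longrightarrow> (A *\<^sub>v v) $ i = (\<Sum>j<n. A $$ (i, j) * v $ j)"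
   and Aw: "\<And>i. i < n \<Longrightarrow> (A *\<^sub>v w) $ i = (\<Sum>j<n. A $$ (i, j) * w $ j)"
    using mult_mat_vec_index_sum A v w by auto
  have "conjugate (A *\<^sub>v v) \<bullet> w = (\<Sum>i<n. cnj ((A *\<^sub>v v) $ i) * w $ i)"
    using A v w by (simp add: conjugate_scalar_prod_sum)
  also have "\<dots> = (\<Sum>i<n. \<Sum>j<n. cnj (v $ j) * (A $$ (j, i) * w $ i))"
    using hermitian_index[OF A h, symmetric]
    by (intro sum.cong refl) (simp add: Av sum_distrib_right sum_distrib_left ac_simps)
  also have "\<dots> = (\<Sum>j<n. \<Sum>i<n. cnj (v $ j) * (A $$ (j, i) * w $ i))"
    by (rule sum.swap)
  also have "\<dots> = (\<Sum>j<n. cnj (v $ j) * (A *\<^sub>v w) $ j)"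
    by (intro sum.cong refl) (simp add: Aw sum_distrib_left)
  also have "\<dots> = conjugate v \<bullet> (A *\<^sub>v w)"
    using A v w by (simp add: conjugate_scalar_prod_sum)
  finally show ?thesis .
qed

definition normalize_vec :: "complex vec \<Rightarrow> complex vec" where
  "normalize_vec w = complex_of_real (1 / sqrt (Re (conjugate w \<bullet> w))) \<cdot>\<^sub>v w"

lemma normalize_vec_carrier [simp]: "w \<in> carrier_vec n \<Longrightarrow> normalize_vec w \<in> carrier_vec n"
  unfolding normalize_vec_def by simp

lemma normalize_vec_unit:
  assumes w: "w \<in> carrier_vec n" and nz: "w \<noteq> 0\<^sub>v n"
  shows "conjugate (normalize_vec w) \<bullet> normalize_vec w = 1"
proof -
  define r where "r = (\<Sum>i<n. (cmod (w $ i))\<^sup>2)"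
  have r: "conjugate w \<bullet> w = complex_of_real r"
    unfolding r_def using conjugate_self_scalar_prod[OF w] by simp
  have "r \<noteq> 0" using r nz conjugate_self_scalar_prod_eq_0_iff[OF w] by auto
  moreover have "r \<ge> 0" unfolding r_def by (intro sum_nonneg) auto
  ultimately have "r > 0" by simp
  then show ?thesis
    unfolding normalize_vec_def using w r
    by (simp add: conjugate_smult_vec field_simps flip: of_real_mult)
qed

lemma normalize_vec_id: "conjugate w \<bullet> w = 1 \<Longrightarrow> normalize_vec w = w"
  unfolding normalize_vec_def by simp

lemma hermitian_unit_eigenvector:
  fixes A :: "complex mat"
  assumes A: "A \<in> carrier_mat n n" and h: "mat_adjoint A = A" and n: "n > 0"
  obtains v e where "v \<in> carrier_vec n" "conjugate v \<bullet> v = 1" "A *\<^sub>v v = complex_of_real e \<cdot>\<^sub>v v"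
proof -
  obtain e where "eigenvalue A e"
    using spectrum_non_empty[OF A n] unfolding spectrum_def by auto
  then obtain w where w: "w \<in> carrier_vec n" "w \<noteq> 0\<^sub>v n" "A *\<^sub>v w = e \<cdot>\<^sub>v w"
    using A unfolding eigenvalue_def eigenvector_def by auto
  have "cnj e * (conjugate w \<bullet> w) = e * (conjugate w \<bullet> w)"
    using hermitian_scalar_prod_swap[OF A h w(1) w(1)] w(1) unfolding w(3) conjugate_smult_vec
    by simp
  then have "cnj e = e"
    using conjugate_self_scalar_prod_eq_0_iff[OF w(1)] w(2) by simp
  then have real: "e = complex_of_real (Re e)"
    by (simp add: complex_eq_iff)
  define v where "v = normalize_vec w"
  have "A *\<^sub>v v = complex_of_real (Re e) \<cdot>\<^sub>v v"
    unfolding v_def normalize_vec_def mult_mat_vec[OF A w(1)] w(3)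
    by (subst real) (auto simp: ac_simps)
  then show ?thesis
    using that[of v "Re e"] normalize_vec_unit[OF w(1,2)] w(1) unfolding v_def by simp
qed

definition orthonormal :: "complex vec list \<Rightarrow> bool" where
  "orthonormal ws \<longleftrightarrow>
     (\<forall>i<length ws. \<forall>j<length ws. conjugate (ws ! i) \<bullet> ws ! j = (if i = j then 1 else 0))"

lemma orthonormal_Cons:
  "orthonormal (v # vs) \<longleftrightarrow> conjugate v \<bullet> v = 1 \<and> orthonormal vs \<and>
     (\<forall>i<length vs. conjugate v \<bullet> vs ! i = 0 \<and> conjugate (vs ! i) \<bullet> v = 0)"
  unfolding orthonormal_def by (auto simp: All_less_Suc2)

lemma orthonormal_mat_of_cols_inverse:
  assumes len: "length us = n" and us: "set us \<subseteq> carrier_vec n" and on: "orthonormal us"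
  shows "mat_of_cols n us * mat_of_rows n (map conjugate us) = 1\<^sub>m n"
proof -
  define R where "R = mat_of_rows n (map conjugate us)"
  define C where "C = mat_of_cols n us"
  have R: "R \<in> carrier_mat n n" and C: "C \<in> carrier_mat n n"
    unfolding R_def C_def using len by auto
  have usi: "\<And>i. i < n \<Longrightarrow> us ! i \<in> carrier_vec n"
    using us len by auto
  have "R * C = 1\<^sub>m n"
  proof (rule eq_matI)
    fix i j assume "i < dim_row (1\<^sub>m n :: complex mat)" "j < dim_col (1\<^sub>m n :: complex mat)"
    then have "i < n" "j < n" by auto
    then have "(R * C) $$ (i, j) = conjugate (us ! i) \<bullet> us ! j"
      using R C len usi unfolding R_def C_def by (simp add: mat_of_rows_row)
    then show "(R * C) $$ (i, j) = 1\<^sub>m n $$ (i, j)"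
      using on \<open>i < n\<close> \<open>j < n\<close> len unfolding orthonormal_def by auto
  qed (use R C in auto)
  then show ?thesis
    using mat_mult_left_right_inverse[OF R C] unfolding R_def C_def by blast
qed

lemma orthonormal_basis_vec_eqI:
  fixes a b :: "complex vec"
  assumes len: "length us = n" and us: "set us \<subseteq> carrier_vec n" and on: "orthonormal us"
    and a: "a \<in> carrier_vec n" and b: "b \<in> carrier_vec n"
    and eq: "\<And>k. k < n \<Longrightarrow> conjugate (us ! k) \<bullet> a = conjugate (us ! k) \<bullet> b"
  shows "a = b"
proof -
  define R where "R = mat_of_rows n (map conjugate us)"
  define C where "C = mat_of_cols n us"
  have R: "R \<in> carrier_mat n n" and C: "C \<in> carrier_mat n n"
    unfolding R_def C_def using len by auto
  have "row R i = conjugate (us ! i)" if "i < n" for i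
  proof -
    have "us ! i \<in> carrier_vec n"
      using len us that by auto
    then have "conjugate (us ! i) \<in> carrier_vec n"
      by simp
    then show ?thesis
      using len that unfolding R_def by (subst mat_of_rows_row) auto
  qed
  then have "R *\<^sub>v a = R *\<^sub>v b"
    using eq R by (intro eq_vecI) auto
  then have "(C * R) *\<^sub>v a = (C * R) *\<^sub>v b"
    using C R a b by (simp add: assoc_mult_mat_vec[of _ n n _ n])
  then show ?thesis
    using orthonormal_mat_of_cols_inverse[OF len us on] a b unfolding C_def R_def by simp
qed

lemma orthonormal_basis_mat_eqI:
  fixes M M' :: "complex mat"
  assumes len: "length us = n" and us: "set us \<subseteq> carrier_vec n" and on: "orthonormal us"
    and M: "M \<in> carrier_mat n n" and M': "M' \<in> carrier_mat n n"
    and eq: "\<And>j. j < n \<Longrightarrow> M *\<^sub>v us ! j = M' *\<^sub>v us ! j"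
  shows "M = M'"
proof -
  define R where "R = mat_of_rows n (map conjugate us)"
  define C where "C = mat_of_cols n us"
  have R: "R \<in> carrier_mat n n" and C: "C \<in> carrier_mat n n"
    unfolding R_def C_def using len by auto
  have CR: "C * R = 1\<^sub>m n"
    using orthonormal_mat_of_cols_inverse[OF len us on] unfolding C_def R_def .
  have "M * C = M' * C"
  proof (rule eq_matI)
    fix i j assume "i < dim_row (M' * C)" "j < dim_col (M' * C)"
    then have i: "i < n" and j: "j < n" using M' C by auto
    have "col C j = us ! j"
      unfolding C_def using len us j by (subst col_mat_of_cols) auto
    have "(M *\<^sub>v us ! j) $ i = (M' *\<^sub>v us ! j) $ i"
      using eq j by simp
    then have "row M i \<bullet> us ! j = row M' i \<bullet> us ! j"
      using M M' i by simp
    with \<open>col C j = us ! j\<close> show "(M * C) $$ (i, j) = (M' * C) $$ (i, j)"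
      using M M' C i j by simp
  qed (use M M' C in auto)
  then have "M * C * R = M' * C * R"
    by simp
  then show ?thesis
    using M M' C R CR by (simp add: assoc_mult_mat[of _ n n _ n _ n])
qed

definition lin_comb :: "nat \<Rightarrow> complex vec list \<Rightarrow> complex vec \<Rightarrow> complex vec" where
  "lin_comb n vs z = vec n (\<lambda>i. \<Sum>l<length vs. z $ l * vs ! l $ i)"

lemma lin_comb_carrier [simp]: "lin_comb n vs z \<in> carrier_vec n"
  unfolding lin_comb_def by simp

lemma scalar_prod_lin_comb_right:
  assumes vs: "set vs \<subseteq> carrier_vec n" and w: "w \<in> carrier_vec n"
  shows "conjugate w \<bullet> lin_comb n vs z = (\<Sum>l<length vs. z $ l * (conjugate w \<bullet> vs ! l))"
proof -
  have "conjugate w \<bullet> lin_comb n vs z = (\<Sum>i<n. \<Sum>l<length vs. z $ l * (cnj (w $ i) * vs ! l $ i))"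
    using w by (simp add: conjugate_scalar_prod_sum lin_comb_def sum_distrib_left ac_simps)
  also have "\<dots> = (\<Sum>l<length vs. \<Sum>i<n. z $ l * (cnj (w $ i) * vs ! l $ i))"
    by (rule sum.swap)
  also have "\<dots> = (\<Sum>l<length vs. z $ l * (conjugate w \<bullet> vs ! l))"
  proof (intro sum.cong refl)
    fix l assume "l \<in> {..<length vs}"
    then have "vs ! l \<in> carrier_vec n"
      using vs by auto
    then show "(\<Sum>i<n. z $ l * (cnj (w $ i) * vs ! l $ i)) = z $ l * (conjugate w \<bullet> vs ! l)"
      using w by (simp add: conjugate_scalar_prod_sum sum_distrib_left)
  qed
  finally show ?thesis .
qed

lemma scalar_prod_lin_comb_left:
  assumes vs: "set vs \<subseteq> carrier_vec n" and y: "y \<in> carrier_vec n"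
  shows "conjugate (lin_comb n vs z) \<bullet> y = (\<Sum>l<length vs. cnj (z $ l) * (conjugate (vs ! l) \<bullet> y))"
proof -
  have "conjugate (lin_comb n vs z) \<bullet> y =
      (\<Sum>i<n. \<Sum>l<length vs. cnj (z $ l) * (cnj (vs ! l $ i) * y $ i))"
    using y
    by (simp add: conjugate_scalar_prod_sum lin_comb_def sum_distrib_left sum_distrib_right ac_simps)
  also have "\<dots> = (\<Sum>l<length vs. \<Sum>i<n. cnj (z $ l) * (cnj (vs ! l $ i) * y $ i))"
    by (rule sum.swap)
  also have "\<dots> = (\<Sum>l<length vs. cnj (z $ l) * (conjugate (vs ! l) \<bullet> y))"
  proof (intro sum.cong refl)
    fix l assume "l \<in> {..<length vs}"
    then have "vs ! l \<in> carrier_vec n"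
      using vs by auto
    then show "(\<Sum>i<n. cnj (z $ l) * (cnj (vs ! l $ i) * y $ i)) =
        cnj (z $ l) * (conjugate (vs ! l) \<bullet> y)"
      using y by (simp add: conjugate_scalar_prod_sum sum_distrib_left)
  qed
  finally show ?thesis .
qed

lemma orthonormal_coordinate:
  assumes vs: "set vs \<subseteq> carrier_vec n" and on: "orthonormal vs" and k: "k < length vs"
  shows "conjugate (vs ! k) \<bullet> lin_comb n vs z = z $ k"
proof -
  have "conjugate (vs ! k) \<bullet> lin_comb n vs z = (\<Sum>l<length vs. z $ l * (if k = l then 1 else 0))"
    using scalar_prod_lin_comb_right[OF vs, of "vs ! k" z] vs k on
    unfolding orthonormal_def by (simp add: subset_iff)
  also have "\<dots> = z $ k"
    using k by (simp add: if_distrib cong: if_cong)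
  finally show ?thesis .
qed

lemma scalar_prod_lin_comb_orthonormal:
  assumes vs: "set vs \<subseteq> carrier_vec n" and on: "orthonormal vs"
    and z: "z \<in> carrier_vec (length vs)" and z': "z' \<in> carrier_vec (length vs)"
  shows "conjugate (lin_comb n vs z) \<bullet> lin_comb n vs z' = conjugate z \<bullet> z'"
  using z z' orthonormal_coordinate[OF vs on]
  by (simp add: scalar_prod_lin_comb_left[OF vs] conjugate_scalar_prod_sum)

lemma orthonormal_map_normalize_vec:
  assumes orth: "corthogonal gs" and gs: "set gs \<subseteq> carrier_vec n"
  shows "orthonormal (map normalize_vec gs)"
  unfolding orthonormal_def
proof (intro allI impI)
  fix i j assume "i < length (map normalize_vec gs)" "j < length (map normalize_vec gs)"
  then have i: "i < length gs" and j: "j < length gs"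
    by auto
  have gsi: "gs ! i \<in> carrier_vec n" and gsj: "gs ! j \<in> carrier_vec n"
    using gs i j by auto
  have orth_ij: "conjugate (gs ! i) \<bullet> gs ! j = 0 \<longleftrightarrow> i \<noteq> j"
    using conjugate_conjugate_sprod[OF gsi gsj] corthogonalD[OF orth i j]
    by (metis conjugate_zero_iff)
  show "conjugate (map normalize_vec gs ! i) \<bullet> map normalize_vec gs ! j = (if i = j then 1 else 0)"
  proof (cases "i = j")
    case True
    then have "gs ! i \<noteq> 0\<^sub>v n"
      using orth_ij conjugate_self_scalar_prod_eq_0_iff[OF gsi] by simp
    then show ?thesis
      using True i normalize_vec_unit[OF gsi] by simp
  next
    case False
    then show ?thesis
      unfolding normalize_vec_def using i j gsi gsj orth_ij by (simp add: conjugate_smult_vec)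
  qed
qed

lemma orthonormal_extension:
  assumes v: "v \<in> carrier_vec n" and vv: "conjugate v \<bullet> v = 1"
  obtains vs where "length (v # vs) = n" "set (v # vs) \<subseteq> carrier_vec n" "orthonormal (v # vs)"
proof -
  interpret cof_vec_space n "TYPE(complex)" .
  have v0: "v \<noteq> 0\<^sub>v n"
    using vv v by auto
  note bc = basis_completion[OF v v0]
  define gs where "gs = gram_schmidt n (basis_completion v)"
  have gs: "corthogonal gs" "set gs \<subseteq> carrier_vec n" "length gs = n"
    using gram_schmidt_result[OF bc(2) bc(4) bc(5) refl] bc(6) unfolding gs_def by auto
  have n0: "n > 0"
    using v0 v by (cases n) auto
  have "basis_completion v = v # tl (basis_completion v)"
    using bc(6,7) n0 by (cases "basis_completion v") auto
  then have "hd gs = v"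
    unfolding gs_def by (metis gram_schmidt_hd v)
  then have "map normalize_vec gs = v # tl (map normalize_vec gs)"
    using gs(3) n0 normalize_vec_id[OF vv] by (cases gs) auto
  moreover have "length (map normalize_vec gs) = n" "set (map normalize_vec gs) \<subseteq> carrier_vec n"
    using gs by auto
  ultimately show ?thesis
    using that[of "tl (map normalize_vec gs)"] orthonormal_map_normalize_vec[OF gs(1,2)] by simp
qed

definition compression :: "complex mat \<Rightarrow> complex vec list \<Rightarrow> complex mat" where
  "compression A vs = mat (length vs) (length vs) (\<lambda>(i, j). conjugate (vs ! i) \<bullet> (A *\<^sub>v vs ! j))"

lemma compression_dim [simp]:
  "dim_row (compression A vs) = length vs" "dim_col (compression A vs) = length vs"
  unfolding compression_def by simp_all

lemma compression_carrier [simp]: "compression A vs \<in> carrier_mat (length vs) (length vs)"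
  unfolding compression_def by simp

lemma compression_hermitian:
  fixes A :: "complex mat"
  assumes A: "A \<in> carrier_mat n n" and h: "mat_adjoint A = A" and vs: "set vs \<subseteq> carrier_vec n"
  shows "mat_adjoint (compression A vs) = compression A vs"
proof -
  have "compression A vs $$ (i, j) = cnj (compression A vs $$ (j, i))"
    if "i < length vs" "j < length vs" for i j
  proof -
    have vi: "vs ! i \<in> carrier_vec n" and vj: "vs ! j \<in> carrier_vec n"
      using vs that by auto
    have "cnj (conjugate (vs ! j) \<bullet> (A *\<^sub>v vs ! i)) = vs ! j \<bullet>c (A *\<^sub>v vs ! i)"
      using A vi vj conjugate_conjugate_sprod[of "vs ! j" n "A *\<^sub>v vs ! i"] by simp
    also have "\<dots> = conjugate (A *\<^sub>v vs ! i) \<bullet> vs ! j"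
      using A vi vj by (subst conjugate_vec_sprod_comm[of _ n]) auto
    also have "\<dots> = conjugate (vs ! i) \<bullet> (A *\<^sub>v vs ! j)"
      by (rule hermitian_scalar_prod_swap[OF A h vi vj])
    finally show ?thesis
      unfolding compression_def using that by simp
  qed
  then show ?thesis
    using hermitian_iff_index[OF compression_carrier] by blast
qed

section \<open>The spectral theorem\<close>

lemma scalar_prod_mult_lin_comb:
  fixes A :: "complex mat"
  assumes A: "A \<in> carrier_mat n n" and h: "mat_adjoint A = A" and vs: "set vs \<subseteq> carrier_vec n"
    and z: "z \<in> carrier_vec (length vs)" and k: "k < length vs"
  shows "conjugate (vs ! k) \<bullet> (A *\<^sub>v lin_comb n vs z) = (compression A vs *\<^sub>v z) $ k"
proof -
  have vsi: "vs ! i \<in> carrier_vec n" if "i < length vs" for i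
    using vs that by auto
  have "conjugate (vs ! k) \<bullet> (A *\<^sub>v lin_comb n vs z) = conjugate (A *\<^sub>v vs ! k) \<bullet> lin_comb n vs z"
    using hermitian_scalar_prod_swap[OF A h vsi[OF k] lin_comb_carrier] by simp
  also have "\<dots> = (\<Sum>l<length vs. z $ l * (conjugate (A *\<^sub>v vs ! k) \<bullet> vs ! l))"
    using scalar_prod_lin_comb_right[OF vs] A vsi[OF k] by simp
  also have "\<dots> = (\<Sum>l<length vs. compression A vs $$ (k, l) * z $ l)"
    using hermitian_scalar_prod_swap[OF A h vsi[OF k] vsi] k
    by (intro sum.cong refl) (simp add: compression_def)
  also have "\<dots> = (compression A vs *\<^sub>v z) $ k"
    using mult_mat_vec_index_sum[of k "compression A vs" z] compression_carrier[of A vs] z k by simp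
  finally show ?thesis .
qed

lemma compression_eigenvector_lift:
  fixes A :: "complex mat"
  assumes A: "A \<in> carrier_mat n n" and h: "mat_adjoint A = A"
    and len: "length (v # vs) = n" and vs: "set (v # vs) \<subseteq> carrier_vec n"
    and on: "orthonormal (v # vs)" and Av: "A *\<^sub>v v = e \<cdot>\<^sub>v v"
    and z: "z \<in> carrier_vec (length vs)" and Az: "compression A vs *\<^sub>v z = \<mu> \<cdot>\<^sub>v z"
  shows "A *\<^sub>v lin_comb n vs z = \<mu> \<cdot>\<^sub>v lin_comb n vs z"
proof (rule orthonormal_basis_vec_eqI[OF len vs on])
  define x where "x = lin_comb n vs z"
  have x: "x \<in> carrier_vec n"
    unfolding x_def by simp
  have v: "v \<in> carrier_vec n" and vs': "set vs \<subseteq> carrier_vec n"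
    using vs by auto
  have on': "orthonormal vs" and perp: "\<And>i. i < length vs \<Longrightarrow> conjugate v \<bullet> vs ! i = 0"
    using on unfolding orthonormal_Cons by auto
  have vx: "conjugate v \<bullet> x = 0"
    unfolding x_def using scalar_prod_lin_comb_right[OF vs' v] perp by simp
  fix k assume k: "k < n"
  have "(v # vs) ! k \<in> carrier_vec n"
    using nth_mem[of k "v # vs"] vs len k by blast
  then have "conjugate ((v # vs) ! k) \<bullet> (\<mu> \<cdot>\<^sub>v x) = \<mu> * (conjugate ((v # vs) ! k) \<bullet> x)"
    using x by simp
  moreover have "conjugate ((v # vs) ! k) \<bullet> (A *\<^sub>v x) = \<mu> * (conjugate ((v # vs) ! k) \<bullet> x)"
  proof (cases k)
    case 0
    have "conjugate v \<bullet> (A *\<^sub>v x) = conjugate (e \<cdot>\<^sub>v v) \<bullet> x"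
      using hermitian_scalar_prod_swap[OF A h v x] Av by simp
    also have "\<dots> = 0"
      using v x vx by (simp add: conjugate_smult_vec)
    finally show ?thesis
      using vx 0 by simp
  next
    case (Suc k')
    then have k': "k' < length vs"
      using k len by simp
    have "conjugate (vs ! k') \<bullet> (A *\<^sub>v x) = \<mu> * z $ k'"
      unfolding x_def using scalar_prod_mult_lin_comb[OF A h vs' z k'] Az z k' by simp
    moreover have "conjugate (vs ! k') \<bullet> x = z $ k'"
      unfolding x_def by (rule orthonormal_coordinate[OF vs' on' k'])
    ultimately show ?thesis
      using Suc by simp
  qed
  ultimately show "conjugate ((v # vs) ! k) \<bullet> (A *\<^sub>v lin_comb n vs z) =
      conjugate ((v # vs) ! k) \<bullet> (\<mu> \<cdot>\<^sub>v lin_comb n vs z)"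
    unfolding x_def by simp
qed (use A in auto)

lemma orthonormal_Cons_lin_comb:
  assumes vs: "set (v # vs) \<subseteq> carrier_vec n" and on: "orthonormal (v # vs)"
    and zs: "set zs \<subseteq> carrier_vec (length vs)" and onz: "orthonormal zs"
  shows "orthonormal (v # map (lin_comb n vs) zs)"
proof -
  have v: "v \<in> carrier_vec n" and vs': "set vs \<subseteq> carrier_vec n"
    using vs by auto
  have vv: "conjugate v \<bullet> v = 1" and on': "orthonormal vs"
    and perp: "\<And>i. i < length vs \<Longrightarrow> conjugate v \<bullet> vs ! i = 0 \<and> conjugate (vs ! i) \<bullet> v = 0"
    using on unfolding orthonormal_Cons by auto
  have "orthonormal (map (lin_comb n vs) zs)"
    using onz zs scalar_prod_lin_comb_orthonormal[OF vs' on']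
    unfolding orthonormal_def by (simp add: subset_iff)
  moreover have "conjugate v \<bullet> lin_comb n vs z = 0" "conjugate (lin_comb n vs z) \<bullet> v = 0" for z
    using scalar_prod_lin_comb_right[OF vs' v] scalar_prod_lin_comb_left[OF vs' v] perp by simp_all
  ultimately show ?thesis
    using vv unfolding orthonormal_Cons by simp
qed

theorem hermitian_spectral_theorem:
  fixes A :: "complex mat"
  assumes "A \<in> carrier_mat n n" "mat_adjoint A = A"
  obtains us lam where "length us = n" "set us \<subseteq> carrier_vec n" "orthonormal us"
    "\<forall>i<n. A *\<^sub>v us ! i = complex_of_real (lam i) \<cdot>\<^sub>v us ! i"
proof -
  have "\<exists>us lam. length us = n \<and> set us \<subseteq> carrier_vec n \<and> orthonormal us \<and>
     (\<forall>i<n. A *\<^sub>v us ! i = complex_of_real (lam i) \<cdot>\<^sub>v us ! i)"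
    using assms
  proof (induction n arbitrary: A)
    case 0
    then show ?case
      by (intro exI[of _ "[]"]) (auto simp: orthonormal_def)
  next
    case (Suc m A)
    note A = Suc.prems(1) and h = Suc.prems(2)
    obtain v e where v: "v \<in> carrier_vec (Suc m)" "conjugate v \<bullet> v = 1"
      and Av: "A *\<^sub>v v = complex_of_real e \<cdot>\<^sub>v v"
      using hermitian_unit_eigenvector[OF A h] by blast
    obtain vs where len: "length (v # vs) = Suc m" and vs: "set (v # vs) \<subseteq> carrier_vec (Suc m)"
      and on: "orthonormal (v # vs)"
      using orthonormal_extension[OF v] by blast
    have "length vs = m"
      using len by simp
    then have C: "compression A vs \<in> carrier_mat m m"
      using compression_carrier[of A vs] by simp
    have "set vs \<subseteq> carrier_vec (Suc m)"
      using vs by simp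
    then obtain zs mu where zs: "length zs = m" "set zs \<subseteq> carrier_vec m" "orthonormal zs"
      and Az: "\<forall>i<m. compression A vs *\<^sub>v zs ! i = complex_of_real (mu i) \<cdot>\<^sub>v zs ! i"
      using Suc.IH[OF C compression_hermitian[OF A h]] by blast
    define us where "us = v # map (lin_comb (Suc m) vs) zs"
    define lam where "lam i = (if i = 0 then e else mu (i - 1))" for i
    have "A *\<^sub>v us ! i = complex_of_real (lam i) \<cdot>\<^sub>v us ! i" if "i < Suc m" for i
    proof (cases i)
      case (Suc i')
      then have "zs ! i' \<in> carrier_vec (length vs)"
        using zs that \<open>length vs = m\<close> by auto
      then show ?thesis
        using compression_eigenvector_lift[OF A h len vs on Av] Az that Suc zs(1)
        unfolding us_def lam_def by simp
    qed (simp add: us_def lam_def Av)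
    moreover have "orthonormal us"
      unfolding us_def using orthonormal_Cons_lin_comb[OF vs on] zs \<open>length vs = m\<close> by simp
    moreover have "length us = Suc m" "set us \<subseteq> carrier_vec (Suc m)"
      unfolding us_def using zs(1) vs by auto
    ultimately show ?case
      by blast
  qed
  then show ?thesis
    using that by blast
qed

section \<open>The trace norm of a Hermitian matrix\<close>

definition spectral_mat :: "nat \<Rightarrow> complex vec list \<Rightarrow> (nat \<Rightarrow> real) \<Rightarrow> complex mat" where
  "spectral_mat n us g =
     mat n n (\<lambda>(i, j). \<Sum>k<n. complex_of_real (g k) * (us ! k $ i * cnj (us ! k $ j)))"

lemma spectral_mat_carrier [simp]: "spectral_mat n us g \<in> carrier_mat n n"
  unfolding spectral_mat_def by simp

lemma spectral_mat_adjoint: "mat_adjoint (spectral_mat n us g) = spectral_mat n us g"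
  by (rule eq_matI, auto simp: spectral_mat_def ac_simps)

lemma spectral_mat_diff:
  "spectral_mat n us g - spectral_mat n us h = spectral_mat n us (\<lambda>k. g k - h k)"
  by (rule eq_matI) (auto simp: spectral_mat_def sum_subtractf[symmetric] algebra_simps)

lemma spectral_mat_mult_vec_index:
  assumes len: "length us = n" and usc: "set us \<subseteq> carrier_vec n"
    and x: "x \<in> carrier_vec n" and i: "i < n"
  shows "(spectral_mat n us g *\<^sub>v x) $ i =
    (\<Sum>k<n. complex_of_real (g k) * (conjugate (us ! k) \<bullet> x) * us ! k $ i)"
proof -
  have "(spectral_mat n us g *\<^sub>v x) $ i =
      (\<Sum>j<n. (\<Sum>k<n. complex_of_real (g k) * (us ! k $ i * cnj (us ! k $ j))) * x $ j)"
    using mult_mat_vec_index_sum[of i "spectral_mat n us g" x] x i unfolding spectral_mat_def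
    by simp
  also have "\<dots> = (\<Sum>j<n. \<Sum>k<n. complex_of_real (g k) * us ! k $ i * (cnj (us ! k $ j) * x $ j))"
    by (rule sum.cong, simp, simp add: sum_distrib_right, rule sum.cong, simp, simp add: ac_simps)
  also have "\<dots> = (\<Sum>k<n. \<Sum>j<n. complex_of_real (g k) * us ! k $ i * (cnj (us ! k $ j) * x $ j))"
    by (rule sum.swap)
  also have "\<dots> = (\<Sum>k<n. complex_of_real (g k) * us ! k $ i * (\<Sum>j<n. cnj (us ! k $ j) * x $ j))"
    by (simp add: sum_distrib_left)
  also have "\<dots> = (\<Sum>k<n. complex_of_real (g k) * (conjugate (us ! k) \<bullet> x) * us ! k $ i)"
  proof (rule sum.cong, simp)
    fix k assume "k \<in> {..<n}"
    then have "us ! k \<in> carrier_vec n"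
      using len usc by auto
    then show "complex_of_real (g k) * us ! k $ i * (\<Sum>j<n. cnj (us ! k $ j) * x $ j) =
        complex_of_real (g k) * (conjugate (us ! k) \<bullet> x) * us ! k $ i"
      using x by (simp add: conjugate_scalar_prod_sum)
  qed
  finally show ?thesis .
qed

lemma spectral_mat_eigenvector:
  assumes len: "length us = n" and usc: "set us \<subseteq> carrier_vec n" and on: "orthonormal us"
    and m: "m < n"
  shows "spectral_mat n us g *\<^sub>v us ! m = complex_of_real (g m) \<cdot>\<^sub>v us ! m"
proof -
  have um: "us ! m \<in> carrier_vec n"
    using usc len m by auto
  have onv: "\<And>k. k < n \<Longrightarrow> conjugate (us ! k) \<bullet> us ! m = (if k = m then 1 else 0)"
    using on len m unfolding orthonormal_def by simp
  have ix: "(spectral_mat n us g *\<^sub>v us ! m) $ i = (complex_of_real (g m) \<cdot>\<^sub>v us ! m) $ i"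
    if i: "i < n" for i
  proof -
    have "(spectral_mat n us g *\<^sub>v us ! m) $ i =
        (\<Sum>k<n. complex_of_real (g k) * (conjugate (us ! k) \<bullet> us ! m) * us ! k $ i)"
      by (rule spectral_mat_mult_vec_index[OF len usc um i])
    also have "\<dots> = (\<Sum>k<n. if k = m then complex_of_real (g k) * us ! k $ i else 0)"
      by (rule sum.cong, simp, simp add: onv)
    also have "\<dots> = complex_of_real (g m) * us ! m $ i"
      using m by (simp add: sum.delta)
    finally show ?thesis
      using i um by simp
  qed
  have d1: "dim_vec (spectral_mat n us g *\<^sub>v us ! m) = n"
    by (simp add: spectral_mat_def)
  have d2: "dim_vec (complex_of_real (g m) \<cdot>\<^sub>v us ! m) = n"
    using um by simp
  show ?thesis
    by (rule eq_vecI, use ix d2 in simp, use d1 d2 in simp)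
qed

lemma spectral_mat_quadratic_form:
  assumes len: "length us = n" and usc: "set us \<subseteq> carrier_vec n" and x: "x \<in> carrier_vec n"
  shows "conjugate x \<bullet> (spectral_mat n us g *\<^sub>v x) =
    (\<Sum>k<n. complex_of_real (g k * (cmod (conjugate (us ! k) \<bullet> x))\<^sup>2))"
proof -
  have d: "dim_vec (spectral_mat n us g *\<^sub>v x) = n"
    by (simp add: spectral_mat_def)
  have "conjugate x \<bullet> (spectral_mat n us g *\<^sub>v x) =
      (\<Sum>i<n. cnj (x $ i) * (spectral_mat n us g *\<^sub>v x) $ i)"
    using conjugate_scalar_prod_sum[of x "spectral_mat n us g *\<^sub>v x"] x d by simp
  also have "\<dots> = (\<Sum>i<n. cnj (x $ i) *
      (\<Sum>k<n. complex_of_real (g k) * (conjugate (us ! k) \<bullet> x) * us ! k $ i))"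
    by (rule sum.cong, simp, simp add: spectral_mat_mult_vec_index[OF len usc x])
  also have "\<dots> = (\<Sum>i<n. \<Sum>k<n.
      complex_of_real (g k) * (conjugate (us ! k) \<bullet> x) * (cnj (x $ i) * us ! k $ i))"
    by (rule sum.cong, simp, simp add: sum_distrib_left mult.commute mult.left_commute)
  also have "\<dots> = (\<Sum>k<n. \<Sum>i<n.
      complex_of_real (g k) * (conjugate (us ! k) \<bullet> x) * (cnj (x $ i) * us ! k $ i))"
    by (rule sum.swap)
  also have "\<dots> = (\<Sum>k<n.
      complex_of_real (g k) * (conjugate (us ! k) \<bullet> x) * (\<Sum>i<n. cnj (x $ i) * us ! k $ i))"
    by (simp add: sum_distrib_left)
  also have "\<dots> = (\<Sum>k<n.
      complex_of_real (g k) * (conjugate (us ! k) \<bullet> x) * cnj (conjugate (us ! k) \<bullet> x))"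
  proof (rule sum.cong, simp)
    fix k assume "k \<in> {..<n}"
    then have uk: "us ! k \<in> carrier_vec n"
      using len usc by auto
    have "cnj (\<Sum>i<n. cnj (us ! k $ i) * x $ i) = (\<Sum>i<n. cnj (x $ i) * us ! k $ i)"
      by (simp add: ac_simps)
    moreover have "conjugate (us ! k) \<bullet> x = (\<Sum>i<n. cnj (us ! k $ i) * x $ i)"
      using x uk by (simp add: conjugate_scalar_prod_sum)
    ultimately show "complex_of_real (g k) * (conjugate (us ! k) \<bullet> x) *
          (\<Sum>i<n. cnj (x $ i) * us ! k $ i) =
        complex_of_real (g k) * (conjugate (us ! k) \<bullet> x) * cnj (conjugate (us ! k) \<bullet> x)"
      by simp
  qed
  also have "\<dots> = (\<Sum>k<n. complex_of_real (g k * (cmod (conjugate (us ! k) \<bullet> x))\<^sup>2))"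
    by (rule sum.cong, simp, simp add: mult.assoc flip: complex_norm_square)
  finally show ?thesis .
qed

lemma spectral_mat_trace:
  assumes len: "length us = n" and usc: "set us \<subseteq> carrier_vec n" and on: "orthonormal us"
  shows "mtrace (spectral_mat n us g) = complex_of_real (\<Sum>k<n. g k)"
proof -
  have "mtrace (spectral_mat n us g) =
      (\<Sum>i<n. \<Sum>k<n. complex_of_real (g k) * (us ! k $ i * cnj (us ! k $ i)))"
    unfolding mtrace_def spectral_mat_def by simp
  also have "\<dots> = (\<Sum>k<n. complex_of_real (g k) * (\<Sum>i<n. cnj (us ! k $ i) * us ! k $ i))"
    by (subst sum.swap, simp add: sum_distrib_left ac_simps)
  also have "\<dots> = (\<Sum>k<n. complex_of_real (g k))"
  proof (rule sum.cong, simp)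
    fix k assume "k \<in> {..<n}"
    then have k: "k < n"
      by simp
    have uk: "us ! k \<in> carrier_vec n"
      using usc len k by auto
    have "(\<Sum>i<n. cnj (us ! k $ i) * us ! k $ i) = conjugate (us ! k) \<bullet> us ! k"
      using uk by (simp add: conjugate_scalar_prod_sum)
    also have "\<dots> = 1"
      using on k len unfolding orthonormal_def by simp
    finally show "complex_of_real (g k) * (\<Sum>i<n. cnj (us ! k $ i) * us ! k $ i) =
        complex_of_real (g k)"
      by simp
  qed
  finally show ?thesis
    by simp
qed

lemma spectral_mat_psd:
  assumes len: "length us = n" and usc: "set us \<subseteq> carrier_vec n" and "\<forall>k. g k \<ge> 0"
  shows "psd (spectral_mat n us g)"
  unfolding psd_def
proof (intro conjI ballI)
  show "spectral_mat n us g \<in>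
      carrier_mat (dim_row (spectral_mat n us g)) (dim_row (spectral_mat n us g))"
    by (simp add: spectral_mat_def)
  show "mat_adjoint (spectral_mat n us g) = spectral_mat n us g"
    by (rule spectral_mat_adjoint)
  fix x :: "complex vec" assume "x \<in> carrier_vec (dim_row (spectral_mat n us g))"
  then have x: "x \<in> carrier_vec n"
    by (simp add: spectral_mat_def)
  show "0 \<le> Re (conjugate x \<bullet> (spectral_mat n us g *\<^sub>v x))"
    unfolding spectral_mat_quadratic_form[OF len usc x] using assms(3) by (simp add: sum_nonneg)
qed

lemma hermitian_eq_spectral_mat:
  fixes A :: "complex mat"
  assumes A: "A \<in> carrier_mat n n" and h: "mat_adjoint A = A"
  obtains us lam where "length us = n" "set us \<subseteq> carrier_vec n" "orthonormal us"
    "A = spectral_mat n us lam"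
proof -
  obtain us lam where us: "length us = n" "set us \<subseteq> carrier_vec n" "orthonormal us"
    and eig: "\<forall>i<n. A *\<^sub>v us ! i = complex_of_real (lam i) \<cdot>\<^sub>v us ! i"
    using hermitian_spectral_theorem[OF A h] by blast
  have "A = spectral_mat n us lam"
    using us eig spectral_mat_eigenvector[OF us]
    by (intro orthonormal_basis_mat_eqI[OF us A spectral_mat_carrier]) auto
  then show ?thesis
    using that us by blast
qed

lemma psd_square_eigenvector:
  fixes C :: "complex mat"
  assumes C: "C \<in> carrier_mat n n" and pC: "psd C" and u: "u \<in> carrier_vec n"
    and CC: "(C * C) *\<^sub>v u = complex_of_real (c^2) \<cdot>\<^sub>v u" and c: "c \<ge> 0"
  shows "C *\<^sub>v u = complex_of_real c \<cdot>\<^sub>v u"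
proof -
  have h: "mat_adjoint C = C" using pC unfolding psd_def by simp
  have quad: "\<And>x. x \<in> carrier_vec n \<Longrightarrow> 0 \<le> Re (conjugate x \<bullet> (C *\<^sub>v x))"
    using pC C unfolding psd_def by auto
  have Cu: "C *\<^sub>v u \<in> carrier_vec n" using C u by simp
  have CCu: "C *\<^sub>v (C *\<^sub>v u) = complex_of_real (c^2) \<cdot>\<^sub>v u" using CC C u by simp
  show ?thesis
  proof (cases "c = 0")
    case True
    have "conjugate (C *\<^sub>v u) \<bullet> (C *\<^sub>v u) = conjugate u \<bullet> (C *\<^sub>v (C *\<^sub>v u))"
      by (rule hermitian_scalar_prod_swap[OF C h u Cu])
    also have "\<dots> = 0" unfolding CCu True using u by simp
    finally have "C *\<^sub>v u = 0\<^sub>v n" using conjugate_self_scalar_prod_eq_0_iff[OF Cu] by simp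
    then show ?thesis using True u by (intro eq_vecI, auto)
  next
    case False
    then have cpos: "c > 0" using c by simp
    define y where "y = C *\<^sub>v u - complex_of_real c \<cdot>\<^sub>v u"
    have y: "y \<in> carrier_vec n" unfolding y_def using Cu u by simp
    have Cy: "C *\<^sub>v y = (- complex_of_real c) \<cdot>\<^sub>v y"
    proof -
      have "C *\<^sub>v y = C *\<^sub>v (C *\<^sub>v u) - C *\<^sub>v (complex_of_real c \<cdot>\<^sub>v u)"
        unfolding y_def using C Cu u by (subst mult_minus_distrib_mat_vec[of _ n n], auto)
      also have "\<dots> = complex_of_real (c^2) \<cdot>\<^sub>v u - complex_of_real c \<cdot>\<^sub>v (C *\<^sub>v u)"
        unfolding CCu using mult_mat_vec[OF C u] by simp
      also have "\<dots> = (- complex_of_real c) \<cdot>\<^sub>v y"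
        unfolding y_def using u Cu C by (intro eq_vecI, auto simp: power2_eq_square algebra_simps)
      finally show ?thesis .
    qed
    have "conjugate y \<bullet> (C *\<^sub>v y) = (- complex_of_real c) * (conjugate y \<bullet> y)"
      unfolding Cy using y by simp
    moreover obtain r where r: "conjugate y \<bullet> y = complex_of_real r" "r \<ge> 0"
      using conjugate_self_scalar_prod[OF y]
      by (intro that[of "\<Sum>i<n. (cmod (y $ i))^2"], auto intro: sum_nonneg)
    ultimately have "0 \<le> - c * r" using quad[OF y] by simp
    then have "r = 0" using cpos r(2) by (simp add: mult_le_0_iff)
    then have "y = 0\<^sub>v n" using conjugate_self_scalar_prod_eq_0_iff[OF y] r by simp
    show ?thesis
    proof (rule eq_vecI)
      fix i assume "i < dim_vec (complex_of_real c \<cdot>\<^sub>v u)"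
      then have i: "i < n" using u by simp
      have "y $ i = 0" using \<open>y = 0\<^sub>v n\<close> i by simp
      then show "(C *\<^sub>v u) $ i = (complex_of_real c \<cdot>\<^sub>v u) $ i" unfolding y_def
        using i u C by simp
    qed (use u C in simp)
  qed
qed

lemma eigenvector_square:
  fixes M :: "complex mat"
  assumes M: "M \<in> carrier_mat n n" and u: "u \<in> carrier_vec n" and Mu: "M *\<^sub>v u = a \<cdot>\<^sub>v u"
  shows "(M * M) *\<^sub>v u = (a * a) \<cdot>\<^sub>v u"
  using M u Mu mult_mat_vec[OF M u, of a] by (simp add: smult_smult_assoc)

lemma spectral_mat_square:
  assumes len: "length us = n" and us: "set us \<subseteq> carrier_vec n" and on: "orthonormal us"
  shows "spectral_mat n us g * spectral_mat n us g = spectral_mat n us (\<lambda>k. (g k)\<^sup>2)"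
proof (rule orthonormal_basis_mat_eqI[OF len us on])
  fix j assume j: "j < n"
  then have u: "us ! j \<in> carrier_vec n"
    using len us by auto
  have "(spectral_mat n us g * spectral_mat n us g) *\<^sub>v us ! j =
      (complex_of_real (g j) * complex_of_real (g j)) \<cdot>\<^sub>v us ! j"
    by (rule eigenvector_square[OF spectral_mat_carrier u spectral_mat_eigenvector[OF len us on j]])
  also have "\<dots> = spectral_mat n us (\<lambda>k. (g k)\<^sup>2) *\<^sub>v us ! j"
    unfolding spectral_mat_eigenvector[OF len us on j] by (simp add: power2_eq_square)
  finally show "(spectral_mat n us g * spectral_mat n us g) *\<^sub>v us ! j =
      spectral_mat n us (\<lambda>k. (g k)\<^sup>2) *\<^sub>v us ! j" .
qed (rule mult_carrier_mat[OF spectral_mat_carrier spectral_mat_carrier], rule spectral_mat_carrier)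

lemma trace_dist_norm_spectral_mat:
  assumes len: "length us = n" and us: "set us \<subseteq> carrier_vec n" and on: "orthonormal us"
  shows "trace_dist_norm (spectral_mat n us lam) = (\<Sum>k<n. \<bar>lam k\<bar>) / 2"
proof -
  define D where "D = spectral_mat n us lam"
  define B where "B = spectral_mat n us (\<lambda>k. \<bar>lam k\<bar>)"
  have DD: "mat_adjoint D * D = spectral_mat n us (\<lambda>k. \<bar>lam k\<bar>\<^sup>2)"
    unfolding D_def spectral_mat_adjoint spectral_mat_square[OF len us on] by simp
  have "(THE B'. B' \<in> carrier_mat (dim_col D) (dim_col D) \<and> psd B' \<and> B' * B' = mat_adjoint D * D) =
      B"
  proof (rule the_equality)
    have "B * B = mat_adjoint D * D"
      unfolding DD B_def spectral_mat_square[OF len us on] by simp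
    moreover have "psd B"
      unfolding B_def by (rule spectral_mat_psd[OF len us]) simp
    ultimately show "B \<in> carrier_mat (dim_col D) (dim_col D) \<and> psd B \<and> B * B = mat_adjoint D * D"
      unfolding B_def D_def by (simp add: spectral_mat_def)
    fix C assume "C \<in> carrier_mat (dim_col D) (dim_col D) \<and> psd C \<and> C * C = mat_adjoint D * D"
    then have C: "C \<in> carrier_mat n n" and pC: "psd C" and CC: "C * C = mat_adjoint D * D"
      by (auto simp: D_def spectral_mat_def)
    show "C = B"
    proof (rule orthonormal_basis_mat_eqI[OF len us on C])
      fix j assume j: "j < n"
      then have u: "us ! j \<in> carrier_vec n"
        using us len by auto
      have "(C * C) *\<^sub>v us ! j = complex_of_real (\<bar>lam j\<bar>\<^sup>2) \<cdot>\<^sub>v us ! j"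
        unfolding CC DD by (rule spectral_mat_eigenvector[OF len us on j])
      then have "C *\<^sub>v us ! j = complex_of_real \<bar>lam j\<bar> \<cdot>\<^sub>v us ! j"
        using psd_square_eigenvector[OF C pC u _ abs_ge_zero] by simp
      then show "C *\<^sub>v us ! j = B *\<^sub>v us ! j"
        unfolding B_def spectral_mat_eigenvector[OF len us on j] .
    qed (simp_all add: B_def)
  qed
  then show ?thesis
    unfolding trace_dist_norm_def D_def[symmetric] B_def
    by (simp add: spectral_mat_trace[OF len us on])
qed

lemma traceless_hermitian_decomposition:
  fixes D :: "complex mat"
  assumes D: "D \<in> carrier_mat n n" and h: "mat_adjoint D = D" and tr: "mtrace D = 0"
  obtains P M where "P \<in> carrier_mat n n" "M \<in> carrier_mat n n" "psd P" "psd M" "D = P - M"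
    "Re (mtrace P) = trace_dist_norm D" "Re (mtrace M) = trace_dist_norm D"
proof -
  obtain us lam where us: "length us = n" "set us \<subseteq> carrier_vec n" "orthonormal us"
    and Dus: "D = spectral_mat n us lam"
    using hermitian_eq_spectral_mat[OF D h] by blast
  define P where "P = spectral_mat n us (\<lambda>k. max (lam k) 0)"
  define M where "M = spectral_mat n us (\<lambda>k. max (- lam k) 0)"
  have sum0: "(\<Sum>k<n. lam k) = 0"
    using tr unfolding Dus spectral_mat_trace[OF us] by (simp del: of_real_sum)
  have "(\<Sum>k<n. max (lam k) 0) = (\<Sum>k<n. (\<bar>lam k\<bar> + lam k) / 2)"
    by (intro sum.cong refl) (simp add: max_def abs_if)
  also have "\<dots> = (\<Sum>k<n. \<bar>lam k\<bar>) / 2"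
    using sum0 by (simp add: sum_divide_distrib[symmetric] sum.distrib)
  finally have trP: "(\<Sum>k<n. max (lam k) 0) = (\<Sum>k<n. \<bar>lam k\<bar>) / 2" .
  have "(\<Sum>k<n. max (- lam k) 0) = (\<Sum>k<n. (\<bar>lam k\<bar> - lam k) / 2)"
    by (intro sum.cong refl) (simp add: max_def abs_if)
  also have "\<dots> = (\<Sum>k<n. \<bar>lam k\<bar>) / 2"
    using sum0 by (simp add: sum_divide_distrib[symmetric] sum_subtractf)
  finally have trM: "(\<Sum>k<n. max (- lam k) 0) = (\<Sum>k<n. \<bar>lam k\<bar>) / 2" .
  have "D = P - M"
    unfolding P_def M_def spectral_mat_diff Dus
    by (rule arg_cong[where f = "spectral_mat n us"]) auto
  moreover have "psd P" "psd M"
    unfolding P_def M_def by (auto intro: spectral_mat_psd[OF us(1,2)])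
  moreover have "Re (mtrace P) = trace_dist_norm D" "Re (mtrace M) = trace_dist_norm D"
    unfolding Dus trace_dist_norm_spectral_mat[OF us] P_def M_def spectral_mat_trace[OF us]
    using trP trM by simp_all
  ultimately show ?thesis
    using that[of P M] unfolding P_def M_def by simp
qed

section \<open>Entropy and mutual information\<close>

definition eta :: "real \<Rightarrow> real" where
  "eta t = (if t \<le> 0 then 0 else - t * ln t)"

lemma eta_nonneg_le: "t \<le> 1 \<Longrightarrow> eta t \<ge> 0"
  unfolding eta_def by (auto simp: mult_nonneg_nonpos ln_le_zero_iff)

lemma eta_le_one: "eta t \<le> 1"
proof (cases "t \<le> 0")
  case False
  then have t: "t > 0" by simp
  have "ln (1/t) \<le> 1/t - 1" using t by (intro ln_le_minus_one, simp)
  then have "- ln t \<le> 1/t - 1" using t by (simp add: ln_div)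
  then have "t * (- ln t) \<le> t * (1/t - 1)" using t by (intro mult_left_mono, auto)
  also have "\<dots> \<le> 1" using t by (simp add: field_simps)
  finally show ?thesis unfolding eta_def using t by simp
qed (simp add: eta_def)

lemma eta_add_le:
  assumes a: "a \<ge> 0" and b: "b \<ge> 0"
  shows "eta (a + b) \<le> eta a + eta b"
proof (cases "a = 0 \<or> b = 0")
  case True then show ?thesis using a b by (auto simp: eta_def)
next
  case False
  then have a': "a > 0" and b': "b > 0" using a b by auto
  have "ln a \<le> ln (a+b)" "ln b \<le> ln (a+b)" using a' b' by auto
  then have l: "a * ln a \<le> a * ln (a+b)" "b * ln b \<le> b * ln (a+b)"
    using a' b' by (auto intro: mult_left_mono)
  have e: "eta (a+b) = - (a * ln (a+b)) - b * ln (a+b)" unfolding eta_def using a' b'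
    by (simp add: algebra_simps)
  have "eta a = - (a * ln a)" "eta b = - (b * ln b)" unfolding eta_def using a' b' by auto
  then show ?thesis using e l by linarith
qed

lemma eta_add_ge:
  assumes a: "a \<ge> 0" and b: "b \<ge> 0" and ab: "a + b \<le> 2"
  shows "eta (a + b) \<ge> eta a - b * (1 + ln 2)"
proof (cases "b = 0")
  case True then show ?thesis by simp
next
  case False
  then have b': "b > 0" using b by simp
  have l2: "ln (a + b) \<le> ln 2" using ab b' a by simp
  show ?thesis
  proof (cases "a = 0")
    case True
    have "ln b \<le> ln 2" using l2 True by simp
    then have "ln b \<le> 1 + ln 2" by linarith
    then have "b * ln b \<le> b * (1 + ln 2)" using b' by (intro mult_left_mono, auto)
    moreover have "eta (a + b) = - (b * ln b)" unfolding eta_def using True b' by simp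
    moreover have "eta a = 0" using True by (simp add: eta_def)
    ultimately show ?thesis by linarith
  next
    case False
    then have a': "a > 0" using a by simp
    have "ln ((a+b)/a) \<le> (a+b)/a - 1"
      using a' b' by (intro ln_le_minus_one, simp add: add_pos_pos)
    then have "ln (a+b) - ln a \<le> b / a"
      using a' b' by (simp add: ln_div field_simps add_pos_pos)
    then have "a * (ln (a+b) - ln a) \<le> a * (b / a)" using a' by (intro mult_left_mono, auto)
    then have t1: "a * ln (a+b) - a * ln a \<le> b" using a' by (simp add: algebra_simps)
    have t2: "b * ln (a+b) \<le> b * ln 2" using l2 b' by (intro mult_left_mono, auto)
    have "eta (a+b) = - a * ln (a+b) - b * ln (a+b)" unfolding eta_def using a' b'
      by (simp add: algebra_simps)
    moreover have "eta a = - a * ln a" unfolding eta_def using a' by simp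
    ultimately show ?thesis using t1 t2 by (simp add: algebra_simps)
  qed
qed

lemma eta_sum_le:
  assumes fin: "finite F" and r: "\<forall>b\<in>F. r b \<ge> 0"
  shows "eta (\<Sum>b\<in>F. r b) \<le> (\<Sum>b\<in>F. eta (r b))"
proof -
  define s where "s = (\<Sum>b\<in>F. r b)"
  have r_le: "r b \<le> s" if "b \<in> F" for b
    unfolding s_def using r fin that by (intro member_le_sum) auto
  show ?thesis
  proof (cases "s > 0")
    case True
    have "- r b * ln s \<le> eta (r b)" if "b \<in> F" for b
    proof (cases "r b = 0")
      case False
      then have "r b > 0"
        using r that by force
      then show ?thesis
        unfolding eta_def using r_le[OF that] by (simp add: mult_left_mono)
    qed (simp add: eta_def)
    then have "(\<Sum>b\<in>F. - r b * ln s) \<le> (\<Sum>b\<in>F. eta (r b))"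
      by (rule sum_mono)
    then show ?thesis
      using True unfolding eta_def s_def[symmetric] by (simp add: s_def sum_distrib_right sum_negf)
  next
    case False
    then have "\<forall>b\<in>F. r b = 0"
      using r_le r by force
    then show ?thesis
      by (simp add: eta_def)
  qed
qed

lemma sum_eta_le:
  assumes fin: "finite F" and r: "\<forall>b\<in>F. r b \<ge> 0"
  shows "(\<Sum>b\<in>F. eta (r b)) \<le> eta (\<Sum>b\<in>F. r b) + (\<Sum>b\<in>F. r b) * ln (card F)"
proof -
  define s where "s = (\<Sum>b\<in>F. r b)"
  define K where "K = real (card F)"
  have r_le: "r b \<le> s" if "b \<in> F" for b
    unfolding s_def using r fin that by (intro member_le_sum) auto
  show ?thesis
  proof (cases "s > 0")
    case True
    then have K: "K > 0"
      unfolding K_def s_def using fin by (auto simp: card_gt_0_iff)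
    have "eta (r b) \<le> r b * (ln K - ln s) + (s / K - r b)" if "b \<in> F" for b
    proof (cases "r b = 0")
      case False
      then have rb: "r b > 0"
        using r that by force
      have "ln (s / (K * r b)) \<le> s / (K * r b) - 1"
        using rb K True by (intro ln_le_minus_one) simp
      then have "r b * ln (s / (K * r b)) \<le> r b * (s / (K * r b) - 1)"
        using rb by (intro mult_left_mono) auto
      then show ?thesis
        using rb K True by (simp add: eta_def ln_div ln_mult algebra_simps)
    qed (use K True in \<open>simp add: eta_def\<close>)
    then have "(\<Sum>b\<in>F. eta (r b)) \<le> (\<Sum>b\<in>F. r b * (ln K - ln s) + (s / K - r b))"
      by (rule sum_mono)
    also have "\<dots> = s * (ln K - ln s)"
      using K unfolding K_def s_def by (simp add: sum.distrib sum_subtractf sum_distrib_right)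
    finally show ?thesis
      using True unfolding s_def[symmetric] K_def[symmetric] eta_def by (simp add: algebra_simps)
  next
    case False
    then have "\<forall>b\<in>F. r b = 0"
      using r_le r by force
    then show ?thesis
      by (simp add: eta_def)
  qed
qed

definition entropy :: "'a set \<Rightarrow> ('a \<Rightarrow> real) \<Rightarrow> real" where
  "entropy S p = (\<Sum>s\<in>S. eta (p s))"

definition mutual_information :: "'a set \<Rightarrow> 'b set \<Rightarrow> ('a \<Rightarrow> 'b \<Rightarrow> real) \<Rightarrow> real" where
  "mutual_information A B P =
     entropy A (\<lambda>a. \<Sum>b\<in>B. P a b) + entropy B (\<lambda>b. \<Sum>a\<in>A. P a b) - entropy (A \<times> B) (\<lambda>(a, b). P a b)"

lemma entropy_Times: "entropy (A \<times> B) (\<lambda>(a, b). P a b) = (\<Sum>a\<in>A. entropy B (P a))"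
  unfolding entropy_def sum.cartesian_product by (simp add: case_prod_unfold)

lemma entropy_cong: "(\<And>s. s \<in> S \<Longrightarrow> p s = q s) \<Longrightarrow> entropy S p = entropy S q"
  unfolding entropy_def by simp

lemma mutual_information_cong:
  assumes "\<And>a b. a \<in> A \<Longrightarrow> b \<in> B \<Longrightarrow> P a b = P' a b"
  shows "mutual_information A B P = mutual_information A B P'"
  unfolding mutual_information_def using assms
  by (intro arg_cong2[where f = "(-)"] arg_cong2[where f = "(+)"] entropy_cong sum.cong) auto

definition pushforward :: "('b \<Rightarrow> 'c) \<Rightarrow> 'b set \<Rightarrow> ('b \<Rightarrow> real) \<Rightarrow> 'c \<Rightarrow> real" where
  "pushforward g B f c = (\<Sum>b\<in>{b\<in>B. g b = c}. f b)"

lemma sum_pushforward: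
  "finite B \<Longrightarrow> g ` B \<subseteq> C \<Longrightarrow> finite C \<Longrightarrow> (\<Sum>c\<in>C. pushforward g B f c) = (\<Sum>b\<in>B. f b)"
  unfolding pushforward_def by (rule sum.group)

lemma entropy_pushforward:
  assumes B: "finite B" and C: "finite C" and g: "g ` B \<subseteq> C"
    and K: "\<forall>c\<in>C. card {b\<in>B. g b = c} \<le> K" and K1: "K \<ge> 1" and f: "\<forall>b\<in>B. f b \<ge> 0"
  shows "entropy C (pushforward g B f) \<le> entropy B f"
    and "entropy B f \<le> entropy C (pushforward g B f) + (\<Sum>b\<in>B. f b) * ln K"
proof -
  have HB: "entropy B f = (\<Sum>c\<in>C. \<Sum>b\<in>{b\<in>B. g b = c}. eta (f b))"
    unfolding entropy_def using sum_pushforward[OF B g C, of "\<lambda>b. eta (f b)"]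
    by (simp add: pushforward_def)
  have fin: "finite {b\<in>B. g b = c}" and fpos: "\<forall>b\<in>{b\<in>B. g b = c}. f b \<ge> 0" for c
    using B f by auto
  have "eta (pushforward g B f c) \<le> (\<Sum>b\<in>{b\<in>B. g b = c}. eta (f b))" for c
    unfolding pushforward_def by (rule eta_sum_le[OF fin fpos])
  then have "entropy C (pushforward g B f) \<le> (\<Sum>c\<in>C. \<Sum>b\<in>{b\<in>B. g b = c}. eta (f b))"
    unfolding entropy_def by (rule sum_mono)
  then show "entropy C (pushforward g B f) \<le> entropy B f"
    unfolding HB .
  have "(\<Sum>b\<in>{b\<in>B. g b = c}. eta (f b)) \<le> eta (pushforward g B f c) + pushforward g B f c * ln K"
    if c: "c \<in> C" for c
  proof -
    let ?F = "{b\<in>B. g b = c}"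
    have "pushforward g B f c * ln (card ?F) \<le> pushforward g B f c * ln K"
    proof (cases "?F = {}")
      case False
      then have "0 < card ?F" "card ?F \<le> K"
        using K c fin[of c] by (auto simp: card_gt_0_iff)
      then have "ln (card ?F) \<le> ln K"
        by simp
      moreover have "pushforward g B f c \<ge> 0"
        unfolding pushforward_def using f by (auto intro!: sum_nonneg)
      ultimately show ?thesis
        by (rule mult_left_mono)
    next
      case True
      then show ?thesis
        unfolding pushforward_def by (simp only: sum.empty)
    qed
    then show ?thesis
      using sum_eta_le[OF fin fpos, of c] unfolding pushforward_def by simp
  qed
  then have "entropy B f \<le> (\<Sum>c\<in>C. eta (pushforward g B f c) + pushforward g B f c * ln K)"
    unfolding HB by (rule sum_mono)
  also have "\<dots> = entropy C (pushforward g B f) + (\<Sum>b\<in>B. f b) * ln K"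
    unfolding entropy_def sum.distrib sum_distrib_right[symmetric] sum_pushforward[OF B g C] ..
  finally show "entropy B f \<le> entropy C (pushforward g B f) + (\<Sum>b\<in>B. f b) * ln K" .
qed

lemma mutual_information_pushforward:
  assumes A: "finite A" and B: "finite B" and C: "finite C" and g: "g ` B \<subseteq> C"
    and K: "\<forall>c\<in>C. card {b\<in>B. g b = c} \<le> K" and K1: "K \<ge> 1"
    and P: "\<forall>a\<in>A. \<forall>b\<in>B. P a b \<ge> 0"
  shows "\<bar>mutual_information A B P - mutual_information A C (\<lambda>a. pushforward g B (P a))\<bar> \<le>
    (\<Sum>a\<in>A. \<Sum>b\<in>B. P a b) * ln K"
proof -
  have A_marginal: "(\<lambda>a. \<Sum>c\<in>C. pushforward g B (P a) c) = (\<lambda>a. \<Sum>b\<in>B. P a b)"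
    using sum_pushforward[OF B g C] by simp
  have C_marginal: "(\<lambda>c. \<Sum>a\<in>A. pushforward g B (P a) c) = pushforward g B (\<lambda>b. \<Sum>a\<in>A. P a b)"
    unfolding pushforward_def by (rule ext) (rule sum.swap)
  have "entropy C (pushforward g B (\<lambda>b. \<Sum>a\<in>A. P a b)) \<le> entropy B (\<lambda>b. \<Sum>a\<in>A. P a b)"
    and "entropy B (\<lambda>b. \<Sum>a\<in>A. P a b) \<le>
      entropy C (pushforward g B (\<lambda>b. \<Sum>a\<in>A. P a b)) + (\<Sum>b\<in>B. \<Sum>a\<in>A. P a b) * ln K"
    using entropy_pushforward[OF B C g K K1] P by (simp_all add: sum_nonneg)
  moreover have "(\<Sum>a\<in>A. entropy C (pushforward g B (P a))) \<le> (\<Sum>a\<in>A. entropy B (P a))"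
    using entropy_pushforward(1)[OF B C g K K1] P by (intro sum_mono) auto
  moreover have "(\<Sum>a\<in>A. entropy B (P a)) \<le>
      (\<Sum>a\<in>A. entropy C (pushforward g B (P a)) + (\<Sum>b\<in>B. P a b) * ln K)"
    using entropy_pushforward(2)[OF B C g K K1] P by (intro sum_mono) auto
  then have "(\<Sum>a\<in>A. entropy B (P a)) \<le>
      (\<Sum>a\<in>A. entropy C (pushforward g B (P a))) + (\<Sum>a\<in>A. \<Sum>b\<in>B. P a b) * ln K"
    by (simp add: sum.distrib sum_distrib_right)
  moreover have "(\<Sum>b\<in>B. \<Sum>a\<in>A. P a b) = (\<Sum>a\<in>A. \<Sum>b\<in>B. P a b)"
    by (rule sum.swap)
  ultimately show ?thesis
    unfolding mutual_information_def A_marginal C_marginal entropy_Times by (simp add: abs_le_iff)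
qed

lemma mult_ln_eq_neg_eta: "x \<ge> 0 \<Longrightarrow> x * ln x = - eta x"
  unfolding eta_def by auto

lemma sum_log2_eq_mutual_information:
  assumes A: "finite A" and B: "finite B" and P: "\<forall>a\<in>A. \<forall>b\<in>B. P a b \<ge> 0"
  shows "(\<Sum>a\<in>A. \<Sum>b\<in>B. if P a b = 0 then 0
      else P a b * log 2 (P a b / ((\<Sum>b'\<in>B. P a b') * (\<Sum>a'\<in>A. P a' b)))) =
    mutual_information A B P / ln 2"
proof -
  define PA where "PA = (\<lambda>a. \<Sum>b'\<in>B. P a b')"
  define PB where "PB = (\<lambda>b. \<Sum>a'\<in>A. P a' b)"
  have tm: "(if P a b = 0 then 0 else P a b * log 2 (P a b / (PA a * PB b))) =
      (- eta (P a b) - P a b * ln (PA a) - P a b * ln (PB b)) / ln 2"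
    if a: "a \<in> A" and b: "b \<in> B" for a b
  proof (cases "P a b = 0")
    case False
    then have pos: "P a b > 0"
      using P a b by force
    have "P a b \<le> PA a"
      unfolding PA_def using P a b B by (intro member_le_sum) auto
    then have pa: "PA a > 0"
      using pos by simp
    have "P a b \<le> PB b"
      unfolding PB_def using P a b A by (intro member_le_sum) auto
    then have pb: "PB b > 0"
      using pos by simp
    have "log 2 (P a b / (PA a * PB b)) = (ln (P a b) - ln (PA a) - ln (PB b)) / ln 2"
      using pos pa pb by (simp add: log_def ln_div ln_mult)
    moreover have "- eta (P a b) - P a b * ln (PA a) - P a b * ln (PB b) =
        P a b * (ln (P a b) - ln (PA a) - ln (PB b))"
      using pos by (simp add: eta_def algebra_simps)
    ultimately show ?thesis
      using False by simp
  qed (simp add: eta_def)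
  have "(\<Sum>a\<in>A. \<Sum>b\<in>B. if P a b = 0 then 0 else P a b * log 2 (P a b / (PA a * PB b))) =
      (\<Sum>a\<in>A. \<Sum>b\<in>B. (- eta (P a b) - P a b * ln (PA a) - P a b * ln (PB b)) / ln 2)"
    using tm by (intro sum.cong refl) auto
  also have "\<dots> = ((\<Sum>a\<in>A. \<Sum>b\<in>B. - eta (P a b)) - (\<Sum>a\<in>A. \<Sum>b\<in>B. P a b * ln (PA a))
      - (\<Sum>a\<in>A. \<Sum>b\<in>B. P a b * ln (PB b))) / ln 2"
    by (simp add: sum_divide_distrib[symmetric] sum_subtractf)
  also have "(\<Sum>a\<in>A. \<Sum>b\<in>B. P a b * ln (PA a)) = - entropy A PA"
  proof -
    have "(\<Sum>a\<in>A. \<Sum>b\<in>B. P a b * ln (PA a)) = (\<Sum>a\<in>A. PA a * ln (PA a))"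
      unfolding PA_def by (simp add: sum_distrib_right)
    also have "\<dots> = (\<Sum>a\<in>A. - eta (PA a))"
      using P by (intro sum.cong refl mult_ln_eq_neg_eta, simp add: PA_def sum_nonneg)
    finally show ?thesis unfolding entropy_def by (simp add: sum_negf)
  qed
  also have "(\<Sum>a\<in>A. \<Sum>b\<in>B. P a b * ln (PB b)) = - entropy B PB"
  proof -
    have "(\<Sum>a\<in>A. \<Sum>b\<in>B. P a b * ln (PB b)) = (\<Sum>b\<in>B. \<Sum>a\<in>A. P a b * ln (PB b))"
      by (rule sum.swap)
    also have "\<dots> = (\<Sum>b\<in>B. PB b * ln (PB b))"
      unfolding PB_def by (simp add: sum_distrib_right)
    also have "\<dots> = (\<Sum>b\<in>B. - eta (PB b))"
      using P by (intro sum.cong refl mult_ln_eq_neg_eta, simp add: PB_def sum_nonneg)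
    finally show ?thesis unfolding entropy_def by (simp add: sum_negf)
  qed
  also have "(\<Sum>a\<in>A. \<Sum>b\<in>B. - eta (P a b)) = - (\<Sum>a\<in>A. entropy B (P a))"
    unfolding entropy_def by (simp add: sum_negf)
  finally show ?thesis
    unfolding mutual_information_def entropy_Times PA_def PB_def by simp
qed

lemma entropy_perturbation:
  assumes S: "finite S" and u: "\<forall>s\<in>S. u s \<ge> 0" and v: "\<forall>s\<in>S. v s \<ge> 0"
    and uv: "\<forall>s\<in>S. u s + v s \<le> 2" and T: "(\<Sum>s\<in>S. v s) = T" "T \<le> 1"
  shows "\<bar>entropy S (\<lambda>s. u s + v s) - entropy S u\<bar> \<le> (1 + ln 2) * T + eta T + T * ln (card S)"
proof -
  have "(\<Sum>s\<in>S. eta (u s) - v s * (1 + ln 2)) \<le> (\<Sum>s\<in>S. eta (u s + v s))"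
    using u v uv by (intro sum_mono eta_add_ge) auto
  then have lower: "entropy S u - (1 + ln 2) * T \<le> entropy S (\<lambda>s. u s + v s)"
    unfolding entropy_def T(1)[symmetric] by (simp add: sum_subtractf sum_distrib_right ac_simps)
  have "entropy S (\<lambda>s. u s + v s) \<le> entropy S u + entropy S v"
    unfolding entropy_def sum.distrib[symmetric] using u v by (intro sum_mono eta_add_le) auto
  also have "entropy S v \<le> eta T + T * ln (card S)"
    using sum_eta_le[OF S v] T(1) unfolding entropy_def by simp
  finally have upper: "entropy S (\<lambda>s. u s + v s) \<le> entropy S u + (eta T + T * ln (card S))"
    by simp
  have "T \<ge> 0"
    using T(1) v by (metis sum_nonneg)
  moreover have "ln (real (card S)) \<ge> 0"
    by (cases "card S") auto
  ultimately have "eta T + T * ln (card S) \<ge> 0"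
    using eta_nonneg_le[OF T(2)] by simp
  moreover have "(1 + ln 2) * T \<ge> 0"
    using \<open>T \<ge> 0\<close> by simp
  ultimately show ?thesis
    using lower upper by (simp add: abs_le_iff)
qed

lemma mutual_information_perturbation:
  assumes A: "finite A" and B: "finite B"
    and P: "\<forall>a\<in>A. \<forall>b\<in>B. P a b \<ge> 0" and E: "\<forall>a\<in>A. \<forall>b\<in>B. E a b \<ge> 0"
    and mP: "(\<Sum>a\<in>A. \<Sum>b\<in>B. P a b) = 1" and mE: "(\<Sum>a\<in>A. \<Sum>b\<in>B. E a b) = T" and T: "T \<le> 1"
  shows "\<bar>mutual_information A B (\<lambda>a b. P a b + E a b) - mutual_information A B P\<bar> \<le>
    3 * ((1 + ln 2) * T + eta T) + 2 * T * (ln (card A) + ln (card B))"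
proof -
  define c where "c = (1 + ln 2) * T + eta T"
  have "A \<noteq> {}" "B \<noteq> {}"
    using mP by auto
  then have lnAB: "ln (card (A \<times> B)) = ln (card A) + ln (card B)"
    using A B by (simp add: card_cartesian_product ln_mult card_gt_0_iff)
  have PE: "\<forall>a\<in>A. \<forall>b\<in>B. P a b + E a b \<ge> 0"
    using P E by (simp add: add_nonneg_nonneg)
  have mass: "(\<Sum>a\<in>A. \<Sum>b\<in>B. P a b + E a b) \<le> 2"
    using mP mE T by (simp add: sum.distrib)
  have PE_le: "P a b + E a b \<le> 2" if "a \<in> A" "b \<in> B" for a b
  proof -
    have "P a b + E a b \<le> (\<Sum>b\<in>B. P a b + E a b)"
      using B PE that by (intro member_le_sum) auto
    also have "\<dots> \<le> (\<Sum>a\<in>A. \<Sum>b\<in>B. P a b + E a b)"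
      using A P E that by (intro member_le_sum) (auto intro!: sum_nonneg add_nonneg_nonneg)
    finally show ?thesis
      using mass by simp
  qed
  have rowA: "(\<Sum>b\<in>B. P a b) + (\<Sum>b\<in>B. E a b) \<le> 2" if "a \<in> A" for a
  proof -
    have "(\<Sum>b\<in>B. P a b + E a b) \<le> (\<Sum>a\<in>A. \<Sum>b\<in>B. P a b + E a b)"
      using A P E that by (intro member_le_sum) (auto intro!: sum_nonneg add_nonneg_nonneg)
    then show ?thesis
      using mass by (simp add: sum.distrib)
  qed
  have colB: "(\<Sum>a\<in>A. P a b) + (\<Sum>a\<in>A. E a b) \<le> 2" if "b \<in> B" for b
  proof -
    have "(\<Sum>a\<in>A. P a b + E a b) \<le> (\<Sum>b\<in>B. \<Sum>a\<in>A. P a b + E a b)"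
      using B P E that by (intro member_le_sum) (auto intro!: sum_nonneg add_nonneg_nonneg)
    then show ?thesis
      using mass by (simp add: sum.distrib sum.swap[of _ B A])
  qed
  have hA: "\<bar>entropy A (\<lambda>a. \<Sum>b\<in>B. P a b + E a b) - entropy A (\<lambda>a. \<Sum>b\<in>B. P a b)\<bar> \<le>
      c + T * ln (card A)"
    using entropy_perturbation[OF A, of "\<lambda>a. \<Sum>b\<in>B. P a b" "\<lambda>a. \<Sum>b\<in>B. E a b"] P E rowA mE T
    unfolding c_def by (simp add: sum.distrib sum_nonneg)
  have hB: "\<bar>entropy B (\<lambda>b. \<Sum>a\<in>A. P a b + E a b) - entropy B (\<lambda>b. \<Sum>a\<in>A. P a b)\<bar> \<le>
      c + T * ln (card B)"
    using entropy_perturbation[OF B, of "\<lambda>b. \<Sum>a\<in>A. P a b" "\<lambda>b. \<Sum>a\<in>A. E a b"] P E colB mE T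
    unfolding c_def by (simp add: sum.distrib sum_nonneg sum.swap[of _ B A])
  have hAB: "\<bar>entropy (A \<times> B) (\<lambda>(a, b). P a b + E a b) - entropy (A \<times> B) (\<lambda>(a, b). P a b)\<bar> \<le>
      c + T * (ln (card A) + ln (card B))"
    using entropy_perturbation[OF finite_cartesian_product[OF A B],
        of "\<lambda>(a, b). P a b" "\<lambda>(a, b). E a b"]
      P E PE_le mE T lnAB
    unfolding c_def by (simp add: sum.cartesian_product case_prod_unfold)
  show ?thesis
    using hA hB hAB unfolding mutual_information_def c_def[symmetric]
    by (simp add: abs_le_iff algebra_simps)
qed

section \<open>Traces, matrix sums and quantum-state channels\<close>

lemma finite_lists_length: "finite {xs :: 'a::finite list. length xs = n}"
  using finite_lists_length_eq[OF finite_UNIV, of n] by simp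

lemma card_lists_length: "card {xs :: 'a::finite list. length xs = n} = card (UNIV :: 'a set) ^ n"
  using card_lists_length_eq[OF finite_UNIV, of n] by simp

lemma ln_card_lists_length:
  "ln (card {xs :: 'a::finite list. length xs = n}) = n * ln (card (UNIV :: 'a set))"
  unfolding card_lists_length by (simp add: ln_realpow finite_UNIV_card_ge_0)

lemma ln_card_nonneg: "ln (card (UNIV :: 'a::finite set)) \<ge> 0"
  by (simp add: finite_UNIV_card_ge_0 Suc_le_eq)

lemma sum_lists_length_Suc:
  "(\<Sum>xs\<in>{xs :: 'a::finite list. length xs = Suc n}. f xs) =
    (\<Sum>x\<in>UNIV. \<Sum>xs\<in>{xs. length xs = n}. f (x # xs))"
proof -
  have "{xs :: 'a list. length xs = Suc n} = (\<lambda>(x, xs). x # xs) ` (UNIV \<times> {xs. length xs = n})"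
    by (auto simp: length_Suc_conv image_iff)
  moreover have "inj_on (\<lambda>(x, xs). x # xs) (UNIV \<times> {xs :: 'a list. length xs = n})"
    by (auto simp: inj_on_def)
  ultimately show ?thesis
    by (simp add: sum.reindex sum.cartesian_product case_prod_unfold)
qed

lemma sum_prod_list_lists_length:
  fixes Q :: "'a::finite \<Rightarrow> real"
  assumes "(\<Sum>x\<in>UNIV. Q x) = 1"
  shows "(\<Sum>xs\<in>{xs. length xs = n}. \<Prod>x\<leftarrow>xs. Q x) = 1"
proof (induction n)
  case 0
  have "{xs :: 'a list. length xs = 0} = {[]}"
    by auto
  then show ?case
    by simp
next
  case (Suc n)
  then show ?case
    using assms
    by (simp add: sum_lists_length_Suc sum_distrib_left[symmetric] sum_distrib_right[symmetric])
qed

lemma psd_trace_nonneg: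
  fixes A :: "complex mat"
  assumes A: "A \<in> carrier_mat n n" and p: "psd A"
  shows "Re (mtrace A) \<ge> 0"
proof -
  have "Re (A $$ (i, i)) \<ge> 0" if i: "i < n" for i
  proof -
    have e: "conjugate (unit_vec n i) = (unit_vec n i :: complex vec)"
      by (intro eq_vecI) (auto simp: unit_vec_def)
    have "conjugate (unit_vec n i) \<bullet> (A *\<^sub>v unit_vec n i) = A $$ (i, i)"
      using A i by (simp add: e)
    then show ?thesis
      using p A unfolding psd_def by (metis carrier_matD(1) unit_vec_carrier)
  qed
  then show ?thesis
    unfolding mtrace_def using A by (auto intro!: sum_nonneg)
qed

lemma mtrace_add: "A \<in> carrier_mat n n \<Longrightarrow> B \<in> carrier_mat n n \<Longrightarrow> mtrace (A + B) = mtrace A + mtrace B"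
  unfolding mtrace_def by (simp add: sum.distrib)

lemma mtrace_diff:
  "A \<in> carrier_mat n n \<Longrightarrow> B \<in> carrier_mat n n \<Longrightarrow> mtrace (A - B) = mtrace A - mtrace B"
  unfolding mtrace_def by (simp add: sum_subtractf)

lemma msum_carrier [simp]: "msum d f S \<in> carrier_mat d d"
  unfolding msum_def by simp

lemma mtrace_msum:
  assumes "\<forall>s\<in>S. f s \<in> carrier_mat d d"
  shows "mtrace (msum d f S) = (\<Sum>s\<in>S. mtrace (f s))"
proof -
  have "mtrace (msum d f S) = (\<Sum>i<d. \<Sum>s\<in>S. f s $$ (i, i))"
    unfolding mtrace_def msum_def by simp
  also have "\<dots> = (\<Sum>s\<in>S. mtrace (f s))"
    unfolding mtrace_def using assms by (subst sum.swap) (intro sum.cong; auto)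
  finally show ?thesis .
qed

lemma msum_hermitian:
  assumes "\<forall>s\<in>S. f s \<in> carrier_mat d d \<and> mat_adjoint (f s) = f s"
  shows "mat_adjoint (msum d f S) = msum d f S"
proof -
  have "msum d f S $$ (i, j) = cnj (msum d f S $$ (j, i))" if "i < d" "j < d" for i j
    using assms hermitian_index[of _ d i j] that by (simp add: msum_def)
  then show ?thesis
    using hermitian_iff_index[OF msum_carrier] by blast
qed

lemma msum_linear:
  assumes add: "\<And>A B. A \<in> carrier_mat d d \<Longrightarrow> B \<in> carrier_mat d d \<Longrightarrow> \<Phi> (A + B) = \<Phi> A + \<Phi> B"
    and car: "\<And>A. A \<in> carrier_mat d d \<Longrightarrow> \<Phi> A \<in> carrier_mat d d"
    and zero: "\<Phi> (0\<^sub>m d d) = 0\<^sub>m d d"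
    and fin: "finite S" and f: "\<forall>s\<in>S. f s \<in> carrier_mat d d"
  shows "\<Phi> (msum d f S) = msum d (\<lambda>s. \<Phi> (f s)) S"
  using fin f
proof (induction S rule: finite_induct)
  case empty
  have "msum d f {} = 0\<^sub>m d d" "msum d (\<lambda>s. \<Phi> (f s)) {} = 0\<^sub>m d d"
    unfolding msum_def by (auto intro: eq_matI)
  then show ?case
    using zero by simp
next
  case (insert s S)
  have msum_insert: "msum d g (insert s S) = g s + msum d g S" if "g s \<in> carrier_mat d d" for g
    using insert that unfolding msum_def by (intro eq_matI) auto
  show ?case
    using insert add car by (simp add: msum_insert)
qed

lemma block_apply_1:
  assumes A: "A \<in> carrier_mat d d" and \<Phi>A: "\<Phi> A \<in> carrier_mat d d"
  shows "block_apply 1 d \<Phi> A = \<Phi> A"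
proof -
  have "mat d d (\<lambda>(a, b). A $$ (0 * d + a, 0 * d + b)) = A"
    using A by (intro eq_matI) auto
  then show ?thesis
    using \<Phi>A by (intro eq_matI) (auto simp: block_apply_def)
qed

lemma completely_positive_carrier:
  "completely_positive d \<Phi> \<Longrightarrow> A \<in> carrier_mat d d \<Longrightarrow> \<Phi> A \<in> carrier_mat d d"
  unfolding completely_positive_def by blast

lemma completely_positive_psd:
  assumes cp: "completely_positive d \<Phi>" and A: "A \<in> carrier_mat d d" and p: "psd A"
  shows "psd (\<Phi> A)"
proof -
  have "psd (block_apply 1 d \<Phi> A)"
    using cp A p unfolding completely_positive_def by (metis mult_1)
  then show ?thesis
    using block_apply_1[of A d \<Phi>] A completely_positive_carrier[OF cp A] by simp
qed

lemma completely_positive_add: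
  "completely_positive d \<Phi> \<Longrightarrow> A \<in> carrier_mat d d \<Longrightarrow> B \<in> carrier_mat d d \<Longrightarrow> \<Phi> (A + B) = \<Phi> A + \<Phi> B"
  unfolding completely_positive_def by blast

lemma completely_positive_diff:
  assumes cp: "completely_positive d \<Phi>" and A: "A \<in> carrier_mat d d" and B: "B \<in> carrier_mat d d"
  shows "\<Phi> (A - B) = \<Phi> A - \<Phi> B"
proof -
  have "A - B = A + (-1) \<cdot>\<^sub>m B"
    using A B by (intro eq_matI) auto
  then have "\<Phi> (A - B) = \<Phi> A + (-1) \<cdot>\<^sub>m \<Phi> B"
    using cp A B unfolding completely_positive_def by auto
  also have "\<dots> = \<Phi> A - \<Phi> B"
    using completely_positive_carrier[OF cp A] completely_positive_carrier[OF cp B]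
    by (intro eq_matI) auto
  finally show ?thesis .
qed

lemma completely_positive_zero:
  assumes cp: "completely_positive d \<Phi>"
  shows "\<Phi> (0\<^sub>m d d) = 0\<^sub>m d d"
proof -
  have z: "(0\<^sub>m d d :: complex mat) \<in> carrier_mat d d"
    by simp
  have "\<Phi> (0\<^sub>m d d) = \<Phi> (0\<^sub>m d d - 0\<^sub>m d d)"
    by (rule arg_cong[where f = \<Phi>]) (auto intro: eq_matI)
  also have "\<dots> = \<Phi> (0\<^sub>m d d) - \<Phi> (0\<^sub>m d d)"
    by (rule completely_positive_diff[OF cp z z])
  also have "\<dots> = 0\<^sub>m d d"
    using completely_positive_carrier[OF cp z] by (intro eq_matI) auto
  finally show ?thesis .
qed

lemma apply_seq_Nil [simp]: "apply_seq N [] ys \<rho> = \<rho>" "apply_seq N xs [] \<rho> = \<rho>"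
  unfolding apply_seq_def by auto

lemma apply_seq_Cons [simp]: "apply_seq N (x # xs) (y # ys) \<rho> = apply_seq N xs ys (N x y \<rho>)"
  unfolding apply_seq_def by simp

lemma apply_seq_append:
  "length xs = length ys \<Longrightarrow>
    apply_seq N (xs @ xs') (ys @ ys') \<rho> = apply_seq N xs' ys' (apply_seq N xs ys \<rho>)"
  unfolding apply_seq_def by (simp add: zip_append)

locale cp_family =
  fixes d :: nat and N :: "'x \<Rightarrow> 'y \<Rightarrow> complex mat \<Rightarrow> complex mat"
  assumes cp: "\<And>x y. completely_positive d (N x y)"
begin

lemma apply_seq_carrier: "\<rho> \<in> carrier_mat d d \<Longrightarrow> apply_seq N xs ys \<rho> \<in> carrier_mat d d"
  by (induction xs ys arbitrary: \<rho> rule: list_induct2')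
    (auto intro: completely_positive_carrier[OF cp])

lemma apply_seq_psd: "\<rho> \<in> carrier_mat d d \<Longrightarrow> psd \<rho> \<Longrightarrow> psd (apply_seq N xs ys \<rho>)"
  by (induction xs ys arbitrary: \<rho> rule: list_induct2')
    (auto intro: completely_positive_carrier[OF cp] completely_positive_psd[OF cp])

lemma apply_seq_add:
  "A \<in> carrier_mat d d \<Longrightarrow> B \<in> carrier_mat d d \<Longrightarrow>
    apply_seq N xs ys (A + B) = apply_seq N xs ys A + apply_seq N xs ys B"
  by (induction xs ys arbitrary: A B rule: list_induct2')
    (auto simp: completely_positive_add[OF cp] intro: completely_positive_carrier[OF cp])

lemma apply_seq_zero: "apply_seq N xs ys (0\<^sub>m d d) = 0\<^sub>m d d"
  by (induction xs ys rule: list_induct2') (auto simp: completely_positive_zero[OF cp])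

lemma apply_seq_msum:
  "finite S \<Longrightarrow> \<forall>s\<in>S. f s \<in> carrier_mat d d \<Longrightarrow>
    apply_seq N xs ys (msum d f S) = msum d (\<lambda>s. apply_seq N xs ys (f s)) S"
  by (rule msum_linear[OF apply_seq_add apply_seq_carrier apply_seq_zero])

end

lemma cp_family_cc_qsc: "cc_qsc d N \<Longrightarrow> cp_family d N"
  unfolding cc_qsc_def by unfold_locales blast

context
  fixes d :: nat and N :: "'x::finite \<Rightarrow> 'y::finite \<Rightarrow> complex mat \<Rightarrow> complex mat"
  assumes cq: "cc_qsc d N"
begin

interpretation cp_family d N
  by (rule cp_family_cc_qsc[OF cq])

lemma apply_seq_trace_sum:
  assumes \<rho>: "\<rho> \<in> carrier_mat d d"
  shows "(\<Sum>ys\<in>{ys. length ys = length xs}. mtrace (apply_seq N xs ys \<rho>)) = mtrace \<rho>"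
  using \<rho>
proof (induction xs arbitrary: \<rho>)
  case Nil
  have "{ys :: 'y list. length ys = 0} = {[]}"
    by auto
  then show ?case
    by simp
next
  case (Cons x xs)
  have car: "N x y \<rho> \<in> carrier_mat d d" for y
    using completely_positive_carrier[OF cp Cons.prems] .
  have "(\<Sum>ys\<in>{ys. length ys = length (x # xs)}. mtrace (apply_seq N (x # xs) ys \<rho>)) =
      (\<Sum>y\<in>UNIV. mtrace (N x y \<rho>))"
    using Cons.IH[OF car] by (simp add: sum_lists_length_Suc)
  also have "\<dots> = mtrace (msum d (\<lambda>y. N x y \<rho>) UNIV)"
    using car by (simp add: mtrace_msum)
  also have "\<dots> = mtrace \<rho>"
    using cq Cons.prems unfolding cc_qsc_def by blast
  finally show ?case .
qed

lemma apply_seq_trace_nonneg: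
  "\<rho> \<in> carrier_mat d d \<Longrightarrow> psd \<rho> \<Longrightarrow> Re (mtrace (apply_seq N xs ys \<rho>)) \<ge> 0"
  using psd_trace_nonneg apply_seq_carrier
    apply_seq_psd
  by blast

lemma sum_Re_apply_seq_trace:
  "\<rho> \<in> carrier_mat d d \<Longrightarrow>
    (\<Sum>ys\<in>{ys. length ys = length xs}. Re (mtrace (apply_seq N xs ys \<rho>))) = Re (mtrace \<rho>)"
  using apply_seq_trace_sum by (simp flip: Re_sum)

lemma out_state_carrier: "out_state d N xs \<rho> \<in> carrier_mat d d"
  unfolding out_state_def by simp

lemma out_state_trace: "\<rho> \<in> carrier_mat d d \<Longrightarrow> mtrace (out_state d N xs \<rho>) = mtrace \<rho>"
  unfolding out_state_def
  using apply_seq_carrier apply_seq_trace_sum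
  by (simp add: mtrace_msum)

lemma out_state_hermitian:
  assumes "\<rho> \<in> carrier_mat d d" "psd \<rho>"
  shows "mat_adjoint (out_state d N xs \<rho>) = out_state d N xs \<rho>"
proof -
  have "mat_adjoint (apply_seq N xs ys \<rho>) = apply_seq N xs ys \<rho>" for ys
    using apply_seq_psd[OF assms] unfolding psd_def by blast
  then show ?thesis
    unfolding out_state_def using apply_seq_carrier[OF assms(1)]
    by (intro msum_hermitian) blast
qed

lemma sum_prefix_outputs:
  assumes \<rho>: "\<rho> \<in> carrier_mat d d" and k: "k \<le> length xs"
  shows "(\<Sum>ys\<in>{ys. length ys = k}. Re (mtrace (apply_seq N xs (ys @ ys') \<rho>))) =
    Re (mtrace (apply_seq N (drop k xs) ys' (out_state d N (take k xs) \<rho>)))"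
proof -
  let ?\<Phi> = "apply_seq N (drop k xs) ys'"
  let ?S = "{ys :: 'y list. length ys = k}"
  have split: "apply_seq N xs (ys @ ys') \<rho> = ?\<Phi> (apply_seq N (take k xs) ys \<rho>)" if "ys \<in> ?S" for ys
    using apply_seq_append[of "take k xs" ys N "drop k xs" ys' \<rho>] that k by simp
  have car: "\<forall>ys\<in>?S. apply_seq N (take k xs) ys \<rho> \<in> carrier_mat d d"
    using apply_seq_carrier[OF \<rho>] by simp
  have "(\<Sum>ys\<in>?S. Re (mtrace (apply_seq N xs (ys @ ys') \<rho>))) =
      Re (mtrace (msum d (\<lambda>ys. ?\<Phi> (apply_seq N (take k xs) ys \<rho>)) ?S))"
    using split car apply_seq_carrier
    by (simp add: mtrace_msum Re_sum)
  also have "\<dots> = Re (mtrace (?\<Phi> (out_state d N (take k xs) \<rho>)))"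
    unfolding out_state_def using k
    by (simp add: apply_seq_msum[OF finite_lists_length car]
        min_absorb2)
  finally show ?thesis .
qed

lemma out_state_diff_decomposition:
  assumes \<alpha>: "density d \<alpha>" and \<beta>: "density d \<beta>"
  obtains P M where "\<And>xs. P xs \<in> carrier_mat d d" "\<And>xs. M xs \<in> carrier_mat d d"
    "\<And>xs. psd (P xs)" "\<And>xs. psd (M xs)"
    "\<And>xs. out_state d N xs \<alpha> - out_state d N xs \<beta> = P xs - M xs"
    "\<And>xs. Re (mtrace (P xs)) = trace_dist_norm (out_state d N xs \<alpha> - out_state d N xs \<beta>)"
    "\<And>xs. Re (mtrace (M xs)) = trace_dist_norm (out_state d N xs \<alpha> - out_state d N xs \<beta>)"
proof -
  have \<alpha>': "\<alpha> \<in> carrier_mat d d" "psd \<alpha>" "mtrace \<alpha> = 1"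
    and \<beta>': "\<beta> \<in> carrier_mat d d" "psd \<beta>" "mtrace \<beta> = 1"
    using \<alpha> \<beta> unfolding density_def by auto
  define D where "D xs = out_state d N xs \<alpha> - out_state d N xs \<beta>" for xs
  have "\<exists>P M. P \<in> carrier_mat d d \<and> M \<in> carrier_mat d d \<and> psd P \<and> psd M \<and> D xs = P - M \<and>
      Re (mtrace P) = trace_dist_norm (D xs) \<and> Re (mtrace M) = trace_dist_norm (D xs)" for xs
  proof -
    have "D xs \<in> carrier_mat d d"
      unfolding D_def using out_state_carrier by (rule minus_carrier_mat)
    moreover have "mat_adjoint (D xs) = D xs"
      unfolding D_def using out_state_carrier
      by (intro hermitian_diff out_state_hermitian \<alpha>' \<beta>') auto
    moreover have "mtrace (D xs) = 0"
      unfolding D_def mtrace_diff[OF out_state_carrier out_state_carrier]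
      using out_state_trace \<alpha>' \<beta>' by simp
    ultimately show ?thesis
      by (rule traceless_hermitian_decomposition) blast
  qed
  then show ?thesis
    using that unfolding D_def by metis
qed

end

section \<open>Output distributions\<close>

lemma drop_fiber_eq:
  assumes "k \<le> n" "length ys' = n - k"
  shows "{ys \<in> {ys. length ys = n}. drop k ys = ys'} = (\<lambda>ys. ys @ ys') ` {ys. length ys = k}"
proof (intro equalityI subsetI)
  fix ys assume "ys \<in> {ys \<in> {ys. length ys = n}. drop k ys = ys'}"
  then show "ys \<in> (\<lambda>ys. ys @ ys') ` {ys. length ys = k}"
    using assms by (intro image_eqI[of _ _ "take k ys"]) auto
qed (use assms in auto)

lemma pushforward_drop:
  assumes "k \<le> n" "length ys' = n - k"
  shows "pushforward (drop k) {ys. length ys = n} f ys' = (\<Sum>ys\<in>{ys. length ys = k}. f (ys @ ys'))"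
  unfolding pushforward_def drop_fiber_eq[OF assms] by (subst sum.reindex) (auto simp: inj_on_def)

lemma card_drop_fiber_le:
  assumes "k \<le> n" "length ys' = n - k"
  shows "card {ys \<in> {ys :: 'a::finite list. length ys = n}. drop k ys = ys'} \<le>
    card (UNIV :: 'a set) ^ k"
  unfolding drop_fiber_eq[OF assms] card_lists_length[symmetric]
  by (rule card_image_le[OF finite_lists_length])

text \<open>The joint pmf of \<open>(X_1^n, Y_(k+1)^n)\<close>: summing out the first \<open>k\<close> outputs leaves
  the averaged channel state \<^term>\<open>out_state d N (take k xs) \<rho>\<close> after \<open>k\<close> uses.\<close>

definition tail_pmf ::
    "nat \<Rightarrow> nat \<Rightarrow> ('x \<Rightarrow> real) \<Rightarrow> ('x \<Rightarrow> 'y::finite \<Rightarrow> complex mat \<Rightarrow> complex mat) \<Rightarrow> complex mat \<Rightarrow>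
      'x list \<Rightarrow> 'y list \<Rightarrow> real" where
  "tail_pmf d k Q N \<rho> xs ys =
     (\<Prod>x\<leftarrow>xs. Q x) * Re (mtrace (apply_seq N (drop k xs) ys (out_state d N (take k xs) \<rho>)))"

context
  fixes d :: nat and N :: "'x::finite \<Rightarrow> 'y::finite \<Rightarrow> complex mat \<Rightarrow> complex mat" and Q :: "'x \<Rightarrow> real"
  assumes cq: "cc_qsc d N" and Q: "\<forall>x. 0 \<le> Q x" "(\<Sum>x\<in>UNIV. Q x) = 1"
begin

interpretation cp_family d N
  by (rule cp_family_cc_qsc[OF cq])

lemma joint_pmf_nonneg: "density d \<rho> \<Longrightarrow> joint_pmf Q N \<rho> xs ys \<ge> 0"
  unfolding joint_pmf_def density_def using Q(1) apply_seq_trace_nonneg[OF cq]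
  by (auto intro!: mult_nonneg_nonneg prod_list_nonneg)

lemma sum_joint_pmf:
  assumes "density d \<rho>"
  shows "(\<Sum>xs\<in>{xs. length xs = n}. \<Sum>ys\<in>{ys. length ys = n}. joint_pmf Q N \<rho> xs ys) = 1"
proof -
  have "(\<Sum>ys\<in>{ys. length ys = n}. joint_pmf Q N \<rho> xs ys) = (\<Prod>x\<leftarrow>xs. Q x)" if "length xs = n" for xs
    using assms that sum_Re_apply_seq_trace[OF cq, of \<rho> xs]
    unfolding joint_pmf_def density_def by (simp add: sum_distrib_left[symmetric])
  then show ?thesis
    using sum_prod_list_lists_length[OF Q(2)] by simp
qed

lemma mutual_info_n_eq:
  "density d \<rho> \<Longrightarrow>
    mutual_info_n Q N \<rho> n =
      mutual_information {xs. length xs = n} {ys. length ys = n} (joint_pmf Q N \<rho>) / ln 2"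
  unfolding mutual_info_n_def Let_def using joint_pmf_nonneg
  by (intro sum_log2_eq_mutual_information finite_lists_length) auto

lemma pushforward_drop_joint_pmf:
  assumes \<rho>: "density d \<rho>" and k: "k \<le> n" and xs: "length xs = n" and ys': "length ys' = n - k"
  shows "pushforward (drop k) {ys. length ys = n} (joint_pmf Q N \<rho> xs) ys' =
    tail_pmf d k Q N \<rho> xs ys'"
  using sum_prefix_outputs[OF cq, of \<rho> k xs ys'] \<rho> k xs
  unfolding pushforward_drop[OF k ys'] joint_pmf_def tail_pmf_def density_def
  by (simp add: sum_distrib_left[symmetric])

lemma tail_pmf_nonneg:
  assumes "density d \<rho>" "k \<le> n" "length xs = n" "length ys' = n - k"
  shows "tail_pmf d k Q N \<rho> xs ys' \<ge> 0"
  unfolding pushforward_drop_joint_pmf[OF assms, symmetric] pushforward_def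
  using joint_pmf_nonneg[OF assms(1)] by (simp add: sum_nonneg)

lemma sum_tail_pmf:
  assumes \<rho>: "density d \<rho>" and k: "k \<le> n"
  shows "(\<Sum>xs\<in>{xs. length xs = n}. \<Sum>ys\<in>{ys. length ys = n - k}. tail_pmf d k Q N \<rho> xs ys) = 1"
proof -
  have drop: "drop k ` {ys. length ys = n} \<subseteq> {ys :: 'y list. length ys = n - k}"
    by auto
  have "(\<Sum>ys\<in>{ys. length ys = n - k}. tail_pmf d k Q N \<rho> xs ys) =
      (\<Sum>ys\<in>{ys. length ys = n}. joint_pmf Q N \<rho> xs ys)" if "length xs = n" for xs
    using pushforward_drop_joint_pmf[OF \<rho> k that]
      sum_pushforward[OF finite_lists_length drop finite_lists_length, of "joint_pmf Q N \<rho> xs"]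
    by simp
  then show ?thesis
    using sum_joint_pmf[OF \<rho>] by simp
qed

lemma mutual_information_joint_tail_pmf:
  assumes \<rho>: "density d \<rho>" and k: "k \<le> n"
  shows "\<bar>mutual_information {xs. length xs = n} {ys. length ys = n} (joint_pmf Q N \<rho>) -
      mutual_information {xs. length xs = n} {ys. length ys = n - k} (tail_pmf d k Q N \<rho>)\<bar>
    \<le> k * ln (card (UNIV :: 'y set))"
proof -
  have "card (UNIV :: 'y set) > 0"
    by (simp add: finite_UNIV_card_ge_0)
  then have K: "card (UNIV :: 'y set) ^ k \<ge> 1"
    by (simp add: Suc_le_eq)
  have "\<bar>mutual_information {xs. length xs = n} {ys. length ys = n} (joint_pmf Q N \<rho>) -
      mutual_information {xs. length xs = n} {ys. length ys = n - k}
        (\<lambda>xs. pushforward (drop k) {ys. length ys = n} (joint_pmf Q N \<rho> xs))\<bar>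
    \<le> (\<Sum>xs\<in>{xs. length xs = n}. \<Sum>ys\<in>{ys. length ys = n}. joint_pmf Q N \<rho> xs ys) *
      ln (card (UNIV :: 'y set) ^ k)"
    by (intro mutual_information_pushforward finite_lists_length)
      (use card_drop_fiber_le[OF k] joint_pmf_nonneg[OF \<rho>] K in auto)
  moreover have "mutual_information {xs. length xs = n} {ys. length ys = n - k}
        (\<lambda>xs. pushforward (drop k) {ys. length ys = n} (joint_pmf Q N \<rho> xs)) =
      mutual_information {xs. length xs = n} {ys. length ys = n - k} (tail_pmf d k Q N \<rho>)"
    using pushforward_drop_joint_pmf[OF \<rho> k] by (intro mutual_information_cong) auto
  ultimately show ?thesis
    by (simp add: sum_joint_pmf[OF \<rho>] ln_realpow)
qed

section \<open>Asymptotic equality of the information rates\<close>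

lemma tail_pmf_coupling:
  assumes \<alpha>: "density d \<alpha>" and \<beta>: "density d \<beta>" and k: "k \<le> n"
    and close: "\<forall>xs. length xs = k \<longrightarrow> trace_dist_norm (out_state d N xs \<alpha> - out_state d N xs \<beta>) < \<epsilon>"
  obtains E F T where
    "\<forall>xs ys. E xs ys \<ge> 0" "\<forall>xs ys. F xs ys \<ge> 0"
    "(\<Sum>xs\<in>{xs. length xs = n}. \<Sum>ys\<in>{ys. length ys = n - k}. E xs ys) = T"
    "(\<Sum>xs\<in>{xs. length xs = n}. \<Sum>ys\<in>{ys. length ys = n - k}. F xs ys) = T"
    "T \<le> \<epsilon>"
    "(\<lambda>xs ys. tail_pmf d k Q N \<alpha> xs ys + E xs ys) = (\<lambda>xs ys. tail_pmf d k Q N \<beta> xs ys + F xs ys)"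
proof -
  define D where "D xs = out_state d N xs \<alpha> - out_state d N xs \<beta>" for xs
  obtain P M where PM: "\<And>xs. P xs \<in> carrier_mat d d" "\<And>xs. M xs \<in> carrier_mat d d"
    "\<And>xs. psd (P xs)" "\<And>xs. psd (M xs)" "\<And>xs. D xs = P xs - M xs"
    "\<And>xs. Re (mtrace (P xs)) = trace_dist_norm (D xs)"
    "\<And>xs. Re (mtrace (M xs)) = trace_dist_norm (D xs)"
    using out_state_diff_decomposition[OF cq \<alpha> \<beta>] unfolding D_def by metis
  define mass where
    "mass R xs ys = (\<Prod>x\<leftarrow>xs. Q x) * Re (mtrace (apply_seq N (drop k xs) ys (R (take k xs))))"
    for R :: "'x list \<Rightarrow> complex mat" and xs ys
  define T where "T = (\<Sum>xs\<in>{xs. length xs = n}. (\<Prod>x\<leftarrow>xs. Q x) * trace_dist_norm (D (take k xs)))"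
  have "mass R xs ys \<ge> 0" if "\<And>xs. R xs \<in> carrier_mat d d" "\<And>xs. psd (R xs)" for R xs ys
    unfolding mass_def using that Q(1) apply_seq_trace_nonneg[OF cq]
    by (auto intro!: mult_nonneg_nonneg prod_list_nonneg)
  moreover have "(\<Sum>xs\<in>{xs. length xs = n}. \<Sum>ys\<in>{ys. length ys = n - k}. mass R xs ys) = T"
    if "\<And>xs. R xs \<in> carrier_mat d d" "\<And>xs. Re (mtrace (R xs)) = trace_dist_norm (D xs)" for R
    unfolding T_def
  proof (intro sum.cong refl)
    fix xs :: "'x list" assume "xs \<in> {xs. length xs = n}"
    then have n: "n = length xs"
      by simp
    show "(\<Sum>ys\<in>{ys. length ys = n - k}. mass R xs ys) =
        (\<Prod>x\<leftarrow>xs. Q x) * trace_dist_norm (D (take k xs))"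
      unfolding mass_def n using sum_Re_apply_seq_trace[OF cq that(1), of "drop k xs"] that(2)
      by (simp add: sum_distrib_left[symmetric])
  qed
  moreover have "T \<le> \<epsilon>"
  proof -
    have "T \<le> (\<Sum>xs\<in>{xs. length xs = n}. (\<Prod>x\<leftarrow>xs. Q x) * \<epsilon>)"
      unfolding T_def using close Q(1) k
      by (intro sum_mono mult_left_mono prod_list_nonneg) (auto simp: D_def intro: less_imp_le)
    then show ?thesis
      by (simp add: sum_distrib_right[symmetric] sum_prod_list_lists_length[OF Q(2)])
  qed
  moreover have "tail_pmf d k Q N \<alpha> xs ys + mass M xs ys = tail_pmf d k Q N \<beta> xs ys + mass P xs ys"
    for xs ys
  proof -
    let ?\<Phi> = "apply_seq N (drop k xs) ys"
    have lin: "Re (mtrace (?\<Phi> X)) + Re (mtrace (?\<Phi> Y)) = Re (mtrace (?\<Phi> (X + Y)))"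
      if "X \<in> carrier_mat d d" "Y \<in> carrier_mat d d" for X Y
      using that apply_seq_carrier
      by (simp add: apply_seq_add mtrace_add[of _ d])
    have "out_state d N (take k xs) \<alpha> + M (take k xs) = out_state d N (take k xs) \<beta> + P (take k xs)"
      using PM out_state_carrier[OF cq] unfolding D_def by (intro mat_diff_eq_imp_add_eq) auto
    then show ?thesis
      unfolding tail_pmf_def mass_def distrib_left[symmetric]
      using lin out_state_carrier[OF cq] PM(1,2) by metis
  qed
  ultimately show ?thesis
    using that[of "mass M" "mass P" T] PM by blast
qed

lemma mutual_information_tail_pmf_diff:
  assumes \<alpha>: "density d \<alpha>" and \<beta>: "density d \<beta>" and k: "k \<le> n" and \<epsilon>: "\<epsilon> \<le> 1"
    and close: "\<forall>xs. length xs = k \<longrightarrow> trace_dist_norm (out_state d N xs \<alpha> - out_state d N xs \<beta>) < \<epsilon>"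
  shows "\<bar>mutual_information {xs. length xs = n} {ys. length ys = n - k} (tail_pmf d k Q N \<alpha>) -
      mutual_information {xs. length xs = n} {ys. length ys = n - k} (tail_pmf d k Q N \<beta>)\<bar>
    \<le> 6 * (2 + ln 2) + 4 * \<epsilon> * n * (ln (card (UNIV :: 'x set)) + ln (card (UNIV :: 'y set)))"
proof -
  let ?X = "{xs :: 'x list. length xs = n}" and ?Y = "{ys :: 'y list. length ys = n - k}"
  let ?L = "ln (card (UNIV :: 'x set)) + ln (card (UNIV :: 'y set))"
  obtain E F T where E: "\<forall>xs ys. E xs ys \<ge> 0" and F: "\<forall>xs ys. F xs ys \<ge> 0"
    and mE: "(\<Sum>xs\<in>?X. \<Sum>ys\<in>?Y. E xs ys) = T" and mF: "(\<Sum>xs\<in>?X. \<Sum>ys\<in>?Y. F xs ys) = T"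
    and T: "T \<le> \<epsilon>"
    and eq: "(\<lambda>xs ys. tail_pmf d k Q N \<alpha> xs ys + E xs ys) =
      (\<lambda>xs ys. tail_pmf d k Q N \<beta> xs ys + F xs ys)"
    using tail_pmf_coupling[OF \<alpha> \<beta> k close] by blast
  define \<Gamma> where "\<Gamma> = 3 * ((1 + ln 2) * T + eta T) + 2 * T * (ln (card ?X) + ln (card ?Y))"
  have "\<bar>mutual_information ?X ?Y (\<lambda>xs ys. tail_pmf d k Q N \<rho> xs ys + R xs ys) -
      mutual_information ?X ?Y (tail_pmf d k Q N \<rho>)\<bar> \<le> \<Gamma>"
    if "density d \<rho>" "\<forall>xs ys. R xs ys \<ge> 0" "(\<Sum>xs\<in>?X. \<Sum>ys\<in>?Y. R xs ys) = T" for \<rho> R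
    unfolding \<Gamma>_def using that T \<epsilon> tail_pmf_nonneg[OF that(1) k]
    by (intro mutual_information_perturbation finite_lists_length sum_tail_pmf[OF that(1) k])
      auto
  from this[OF \<alpha> E mE] this[OF \<beta> F mF]
  have "\<bar>mutual_information ?X ?Y (tail_pmf d k Q N \<alpha>) - mutual_information ?X ?Y (tail_pmf d k Q N \<beta>)\<bar>
      \<le> 2 * \<Gamma>"
    unfolding eq by linarith
  also have "\<Gamma> \<le> 3 * (2 + ln 2) + 2 * \<epsilon> * n * ?L"
  proof -
    have T0: "T \<ge> 0"
      using mE E by (metis sum_nonneg)
    have "ln (card ?X) + ln (card ?Y) \<le> n * ?L"
      using ln_card_nonneg[where 'a = 'y]
      by (simp add: ln_card_lists_length algebra_simps mult_right_mono)
    moreover have "ln (card ?X) + ln (card ?Y) \<ge> 0"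
      using ln_card_nonneg[where 'a = 'x] ln_card_nonneg[where 'a = 'y]
      by (simp add: ln_card_lists_length)
    ultimately have "T * (ln (card ?X) + ln (card ?Y)) \<le> \<epsilon> * (n * ?L)"
      using T0 T by (intro mult_mono) auto
    moreover have "(1 + ln 2) * T \<le> 1 + ln 2"
      using T \<epsilon> T0 by (simp add: mult_left_le)
    moreover have "eta T \<le> 1"
      by (rule eta_le_one)
    ultimately show ?thesis
      unfolding \<Gamma>_def by (simp add: algebra_simps)
  qed
  finally show ?thesis
    by simp
qed

lemma mutual_info_n_diff_le:
  assumes \<alpha>: "density d \<alpha>" and \<beta>: "density d \<beta>" and k: "k \<le> n" and \<epsilon>: "\<epsilon> \<le> 1"
    and close: "\<forall>xs. length xs = k \<longrightarrow> trace_dist_norm (out_state d N xs \<alpha> - out_state d N xs \<beta>) < \<epsilon>"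
  shows "\<bar>mutual_info_n Q N \<alpha> n - mutual_info_n Q N \<beta> n\<bar> \<le>
    (2 * k * ln (card (UNIV :: 'y set)) + 6 * (2 + ln 2)
      + 4 * \<epsilon> * n * (ln (card (UNIV :: 'x set)) + ln (card (UNIV :: 'y set)))) / ln 2"
proof -
  have "\<bar>mutual_information {xs. length xs = n} {ys. length ys = n} (joint_pmf Q N \<alpha>) -
      mutual_information {xs. length xs = n} {ys. length ys = n} (joint_pmf Q N \<beta>)\<bar> \<le>
    2 * k * ln (card (UNIV :: 'y set)) + 6 * (2 + ln 2)
      + 4 * \<epsilon> * n * (ln (card (UNIV :: 'x set)) + ln (card (UNIV :: 'y set)))"
    using mutual_information_joint_tail_pmf[OF \<alpha> k]
      mutual_information_joint_tail_pmf[OF \<beta> k]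
      mutual_information_tail_pmf_diff[OF \<alpha> \<beta> k \<epsilon> close]
    by (simp add: abs_le_iff)
  then show ?thesis
    unfolding mutual_info_n_eq[OF \<alpha>] mutual_info_n_eq[OF \<beta>]
    by (simp add: diff_divide_distrib[symmetric] divide_right_mono)
qed

lemma mutual_info_n_diff_sublinear:
  assumes ind: "indecomposable d N" and \<alpha>: "density d \<alpha>" and \<beta>: "density d \<beta>" and \<epsilon>: "(\<epsilon>::real) > 0"
  shows "\<exists>C. \<forall>\<^sub>F n in sequentially.
    \<bar>mutual_info_n Q N \<alpha> n - mutual_info_n Q N \<beta> n\<bar> \<le> C + \<epsilon> * real n"
proof -
  define L where "L = 4 * (ln (card (UNIV :: 'x set)) + ln (card (UNIV :: 'y set))) / ln 2"
  have L: "L \<ge> 0"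
    unfolding L_def using ln_card_nonneg[where 'a = 'x] ln_card_nonneg[where 'a = 'y] by simp
  define \<delta> where "\<delta> = min 1 (\<epsilon> / (L + 1))"
  have \<delta>: "\<delta> > 0" "\<delta> \<le> 1" "\<delta> * L \<le> \<epsilon>"
    unfolding \<delta>_def using \<epsilon> L by (auto simp: min_def field_simps)
  obtain k where close:
    "\<forall>xs. length xs = k \<longrightarrow> trace_dist_norm (out_state d N xs \<alpha> - out_state d N xs \<beta>) < \<delta>"
    using ind \<alpha> \<beta> \<delta>(1) unfolding indecomposable_def by (meson order_refl)
  define C where "C = (2 * k * ln (card (UNIV :: 'y set)) + 6 * (2 + ln 2)) / ln 2"
  have "\<bar>mutual_info_n Q N \<alpha> n - mutual_info_n Q N \<beta> n\<bar> \<le> C + \<epsilon> * real n" if "n \<ge> k" for n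
  proof -
    have "ln (2::real) > 0"
      by simp
    then have "(2 * k * ln (card (UNIV :: 'y set)) + 6 * (2 + ln 2)
        + 4 * \<delta> * n * (ln (card (UNIV :: 'x set)) + ln (card (UNIV :: 'y set)))) / ln 2 = C + \<delta> * L * real n"
      unfolding C_def L_def by (simp add: field_simps)
    then have "\<bar>mutual_info_n Q N \<alpha> n - mutual_info_n Q N \<beta> n\<bar> \<le> C + \<delta> * L * real n"
      using mutual_info_n_diff_le[OF \<alpha> \<beta> that \<delta>(2) close] by simp
    also have "\<dots> \<le> C + \<epsilon> * real n"
      using \<delta>(3) by (simp add: mult_right_mono)
    finally show ?thesis .
  qed
  then show ?thesis
    unfolding eventually_sequentially by blast
qed

end

lemma sublinear_div_LIMSEQ_zero:
  fixes f :: "nat \<Rightarrow> real"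
  assumes "\<And>\<epsilon>::real. \<epsilon> > 0 \<Longrightarrow> \<exists>C. \<forall>\<^sub>F n in sequentially. \<bar>f n\<bar> \<le> C + \<epsilon> * real n"
  shows "(\<lambda>n. f n / real n) \<longlonglongrightarrow> 0"
proof (rule tendstoI)
  fix r :: real assume r: "r > 0"
  then have "r / 2 > 0"
    by simp
  then obtain C where C: "\<forall>\<^sub>F n in sequentially. \<bar>f n\<bar> \<le> C + r / 2 * real n"
    using assms by blast
  have "(\<lambda>n. C / real n) \<longlonglongrightarrow> 0"
    by (intro tendsto_divide_0[OF tendsto_const] filterlim_at_top_imp_at_infinity
        filterlim_real_sequentially)
  then have "\<forall>\<^sub>F n in sequentially. C / real n < r / 2"
    using r by (intro order_tendstoD(2)) auto
  with C eventually_gt_at_top[of 0] show "\<forall>\<^sub>F n in sequentially. dist (f n / real n) 0 < r"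
  proof eventually_elim
    case (elim n)
    then have "\<bar>f n\<bar> / real n \<le> C / real n + r / 2"
      by (simp add: field_simps)
    with elim have "\<bar>f n\<bar> / real n < r"
      by linarith
    then show ?case
      by (simp add: abs_divide)
  qed
qed

theorem theorem1:
  fixes d :: nat
    and N :: "'x::finite \<Rightarrow> 'y::finite \<Rightarrow> complex mat \<Rightarrow> complex mat"
    and Q :: "'x \<Rightarrow> real"
    and \<alpha> \<beta> :: "complex mat"
  assumes "cc_qsc d N"
    and "indecomposable d N"
    and "\<forall>x. 0 \<le> Q x" and "(\<Sum>x\<in>UNIV. Q x) = 1"
    and "density d \<alpha>" and "density d \<beta>"
  shows "(\<lambda>n. I_n Q N \<alpha> n - I_n Q N \<beta> n) \<longlonglongrightarrow> 0"
proof -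
  have "(\<lambda>n. (mutual_info_n Q N \<alpha> n - mutual_info_n Q N \<beta> n) / real n) \<longlonglongrightarrow> 0"
    using mutual_info_n_diff_sublinear[OF assms(1,3,4,2,5,6)] by (rule sublinear_div_LIMSEQ_zero)
  then show ?thesis
    unfolding I_n_def diff_divide_distrib .
qed

end
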